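(* Let $d\ge3$ and let $\mathscr P_d(y,a^\dagger)$ be the space of polynomials in commuting variables $y^\mu,a^{\dagger\mu}$, $\mu=1,\dots,d$. Let $T=\eta^{\mu\nu}\frac{\partial}{\partial a^{\dagger\mu}}\frac{\partial}{\partial a^{\dagger\nu}}$, $\Box=\eta^{\mu\nu}\frac{\partial}{\partial y^\mu}\frac{\partial}{\partial y^\nu}$, $S=\eta^{\mu\nu}\frac{\partial}{\partial a^{\dagger\mu}}\frac{\partial}{\partial y^\nu}$, and let $\mathscr N=\ker T\cap\ker\Box\subset\mathscr P_d(y,a^\dagger)$. Then $S$ maps $\mathscr N$ onto $\mathscr N$, i.e. $S(\mathscr N)=\mathscr N$.
   Context: $\eta^{\mu\nu}$ is a nondegenerate constant symmetric (Minkowski) metric on $\mathbb R^d$. The operators $T,\Box,S$ pairwise commute, so $S$ preserves $\mathscr N$. *)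

theory Defs
  imports Complex_Main
begin

text \<open>Polynomials in the commuting variables y^0..y^(d-1), a^0..a^(d-1) (0-based indices)
  over the reals, represented by their coefficient functions: p al be is the coefficient of
  the monomial prod_mu y^mu^(al mu) * a^mu^(be mu).\<close>

type_synonym cpoly = "(nat \<Rightarrow> nat) \<Rightarrow> (nat \<Rightarrow> nat) \<Rightarrow> real"

definition is_poly :: "nat \<Rightarrow> cpoly \<Rightarrow> bool" where
  "is_poly d p \<longleftrightarrow> finite {(al, be). p al be \<noteq> 0} \<and>
     (\<forall>al be. p al be \<noteq> 0 \<longrightarrow> (\<forall>i. d \<le> i \<longrightarrow> al i = 0 \<and> be i = 0))"

definition dy :: "nat \<Rightarrow> cpoly \<Rightarrow> cpoly" where
  "dy mu p = (\<lambda>al be. of_nat (Suc (al mu)) * p (al(mu := Suc (al mu))) be)"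

definition da :: "nat \<Rightarrow> cpoly \<Rightarrow> cpoly" where
  "da mu p = (\<lambda>al be. of_nat (Suc (be mu)) * p al (be(mu := Suc (be mu))))"

definition opT :: "nat \<Rightarrow> (nat \<Rightarrow> nat \<Rightarrow> real) \<Rightarrow> cpoly \<Rightarrow> cpoly" where
  "opT d eta p = (\<lambda>al be. \<Sum>mu<d. \<Sum>nu<d. eta mu nu * da mu (da nu p) al be)"

definition opBox :: "nat \<Rightarrow> (nat \<Rightarrow> nat \<Rightarrow> real) \<Rightarrow> cpoly \<Rightarrow> cpoly" where
  "opBox d eta p = (\<lambda>al be. \<Sum>mu<d. \<Sum>nu<d. eta mu nu * dy mu (dy nu p) al be)"

definition opS :: "nat \<Rightarrow> (nat \<Rightarrow> nat \<Rightarrow> real) \<Rightarrow> cpoly \<Rightarrow> cpoly" where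
  "opS d eta p = (\<lambda>al be. \<Sum>mu<d. \<Sum>nu<d. eta mu nu * da mu (dy nu p) al be)"

definition harmN :: "nat \<Rightarrow> (nat \<Rightarrow> nat \<Rightarrow> real) \<Rightarrow> cpoly set" where
  "harmN d eta = {p. is_poly d p \<and> opT d eta p = (\<lambda>_ _. 0) \<and> opBox d eta p = (\<lambda>_ _. 0)}"

definition sym_nondeg :: "nat \<Rightarrow> (nat \<Rightarrow> nat \<Rightarrow> real) \<Rightarrow> bool" where
  "sym_nondeg d eta \<longleftrightarrow> (\<forall>mu<d. \<forall>nu<d. eta mu nu = eta nu mu) \<and>
     (\<forall>v::nat \<Rightarrow> real. (\<forall>nu<d. (\<Sum>mu<d. eta mu nu * v mu) = 0) \<longrightarrow> (\<forall>mu<d. v mu = 0))"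

end

theory Submission
  imports Defs "HOL-Library.Function_Algebras"
begin

(*
  Write N(m,n) for the polynomials of N of bidegree (m,n) in (y,a). Since S maps N(m+1,n+1) to N(m,n)
  and N is the direct sum of the N(m,n), it suffices to show that S : N(m+1,n+1) -> N(m,n) is onto.

  Let g be the inverse of eta, let y^2, a^2, y.a be the corresponding quadratic forms, let
  E = y.d/da and F = a.d/dy, and c_m = 2m + d - 2. The lift
    L f = c_m c_n (y.a) f - c_n y^2 F f - c_m a^2 E f + y^2 a^2 S f
  maps N(m,n) into N(m+1,n+1), so S o L is an endomorphism of the finite-dimensional space N(m,n)
  and it suffices that it is injective. The commutation relations give S psi_k = psi_(k+1) S for an
  explicit family psi_k = A_k - B_k EF - B'_k FE + (terms that factor through S) with psi_0 = S o L.
  If psi_k f = 0 then, by induction on the degree in a, S f = 0, so f is an eigenvector of EF.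
  On bidegree (P,Q) the only eigenvalues of EF are (t+1)(P-Q+t) with t <= Q, and for d >= 3 the
  resulting eigenvalue of psi_k is positive; hence f = 0.
*)

instantiation "fun" :: (type, real_vector) real_vector
begin

definition scaleR_fun :: "real \<Rightarrow> ('a \<Rightarrow> 'b) \<Rightarrow> 'a \<Rightarrow> 'b" where
  "scaleR_fun c f = (\<lambda>x. c *\<^sub>R f x)"

instance
  by standard (simp_all add: scaleR_fun_def fun_eq_iff scaleR_add_right scaleR_add_left)

end

lemma scaleR_fun_apply [simp]: "(c *\<^sub>R f) x = c *\<^sub>R f x"
  by (simp add: scaleR_fun_def)

lemma sum_fun_apply: "(\<Sum>i\<in>I. F i) x = (\<Sum>i\<in>I. F i x)"
  by (induction I rule: infinite_finite_induct) auto

lemma linear_if_zero: "linear L \<Longrightarrow> L (if P then x else 0) = (if P then L x else 0)"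
  by (simp add: linear_0)

lemma scaleR_if_zero [simp]: "c *\<^sub>R (if P then x else 0) = (if P then c *\<^sub>R x else 0)"
  for x :: "'a::real_vector"
  by simp

lemma scaleR_indicator [simp]: "(if P then 1 else 0) *\<^sub>R x = (if P then x else 0)"
  for x :: "'a::real_vector"
  by simp

text \<open>Function_Algebras also makes \<^typ>\<open>cpoly\<close> a ring under pointwise multiplication, so the
  simplifier's numeral normalisation produces products such as \<open>2 * p\<close>; these rules turn them
  back into scalar multiples.\<close>

lemma of_nat_mult_cpoly [simp]: "(of_nat n :: cpoly) * p = real n *\<^sub>R p"
  by (simp add: fun_eq_iff)

lemma numeral_mult_cpoly [simp]: "(numeral k :: cpoly) * p = numeral k *\<^sub>R p"
  by (simp add: fun_eq_iff)

lemma mult_numeral_cpoly [simp]: "p * (numeral k :: cpoly) = numeral k *\<^sub>R p"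
  by (simp add: fun_eq_iff)

definition commute :: "('a \<Rightarrow> 'a) \<Rightarrow> ('a \<Rightarrow> 'a) \<Rightarrow> bool" where
  "commute L M \<longleftrightarrow> (\<forall>x. L (M x) = M (L x))"

lemma commuteD: "commute L M \<Longrightarrow> L (M x) = M (L x)"
  by (simp add: commute_def)

lemma commute_sym: "commute L M \<Longrightarrow> commute M L"
  by (simp add: commute_def)

lemma linear_comp: "linear M \<Longrightarrow> linear N \<Longrightarrow> linear (\<lambda>x. M (N x))"
  using linear_compose[of N M] by (simp add: o_def)

lemma linear_inj_on_imp_surj_on:
  fixes L :: "'a::real_vector \<Rightarrow> 'a"
  assumes L: "linear L" and V: "subspace V" "V \<subseteq> span W" "finite W"
    and LV: "L ` V \<subseteq> V" and inj: "inj_on L V"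
  shows "L ` V = V"
proof
  obtain B where B: "B \<subseteq> V" "independent B" "V \<subseteq> span B"
    by (rule maximal_independent_subset)
  have "finite B"
    using independent_span_bound[OF V(3) B(2)] B(1) V(2) by auto
  have span_B: "span B = V"
    using span_minimal[OF B(1) V(1)] B(3) by auto
  have indep: "independent (L ` B)"
    using linear_independent_injective_image[OF L B(2)] inj span_B by simp
  have card: "card (L ` B) = card B"
    using card_image inj_on_subset[OF inj B(1)] by blast
  have "V \<subseteq> span (L ` B)"
  proof
    fix v
    assume "v \<in> V"
    show "v \<in> span (L ` B)"
    proof (rule ccontr)
      assume v: "v \<notin> span (L ` B)"
      then have "independent (insert v (L ` B))"
        using indep by (simp add: independent_insertI)
      moreover have "insert v (L ` B) \<subseteq> span B"
        using \<open>v \<in> V\<close> LV B(1) span_B by auto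
      ultimately have "card (insert v (L ` B)) \<le> card B"
        using independent_span_bound[OF \<open>finite B\<close>] by auto
      moreover have "v \<notin> L ` B"
        using v span_base by blast
      ultimately show False
        using card \<open>finite B\<close> by simp
    qed
  qed
  then show "V \<subseteq> L ` V"
    by (simp add: linear_span_image[OF L] span_B)
qed (rule LV)

definition mul_y :: "nat \<Rightarrow> cpoly \<Rightarrow> cpoly" where
  "mul_y mu p = (\<lambda>al be. if al mu = 0 then 0 else p (al(mu := al mu - 1)) be)"

definition mul_a :: "nat \<Rightarrow> cpoly \<Rightarrow> cpoly" where
  "mul_a mu p = (\<lambda>al be. if be mu = 0 then 0 else p al (be(mu := be mu - 1)))"

lemma linear_dy: "linear (dy mu)"
  by (rule linearI) (simp_all add: dy_def fun_eq_iff algebra_simps)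

lemma linear_da: "linear (da mu)"
  by (rule linearI) (simp_all add: da_def fun_eq_iff algebra_simps)

lemma linear_mul_y: "linear (mul_y mu)"
  by (rule linearI) (simp_all add: mul_y_def fun_eq_iff)

lemma linear_mul_a: "linear (mul_a mu)"
  by (rule linearI) (simp_all add: mul_a_def fun_eq_iff)

lemmas linear_intros = linear_compose_sum[OF ballI] linear_compose_scale_right linear_comp
  linear_dy linear_da linear_mul_y linear_mul_a

lemmas linear_simps = linear_add linear_scale linear_sum linear_0 linear_diff linear_neg linear_if_zero

lemmas [simp] = linear_simps[OF linear_dy] linear_simps[OF linear_da]
  linear_simps[OF linear_mul_y] linear_simps[OF linear_mul_a]

lemma dy_mul_y: "dy mu (mul_y nu p) = mul_y nu (dy mu p) + (if mu = nu then p else 0)"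
  by (auto simp: fun_eq_iff dy_def mul_y_def fun_upd_twist algebra_simps)

lemma da_mul_a: "da mu (mul_a nu p) = mul_a nu (da mu p) + (if mu = nu then p else 0)"
  by (auto simp: fun_eq_iff da_def mul_a_def fun_upd_twist algebra_simps)

lemma commute_dy_mul_a: "commute (dy mu) (mul_a nu)"
  by (auto simp: commute_def fun_eq_iff dy_def mul_a_def)

lemma commute_da_mul_y: "commute (da mu) (mul_y nu)"
  by (auto simp: commute_def fun_eq_iff da_def mul_y_def)

lemma commute_dy_dy: "commute (dy mu) (dy nu)"
  by (auto simp: commute_def fun_eq_iff dy_def fun_upd_twist)

lemma commute_da_da: "commute (da mu) (da nu)"
  by (auto simp: commute_def fun_eq_iff da_def fun_upd_twist)

lemma commute_dy_da: "commute (dy mu) (da nu)"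
  by (auto simp: commute_def fun_eq_iff dy_def da_def)

lemma commute_mul_y_mul_a: "commute (mul_y mu) (mul_a nu)"
  by (auto simp: commute_def fun_eq_iff mul_y_def mul_a_def)

lemmas dy_mul_a = commuteD[OF commute_dy_mul_a]
lemmas da_mul_y = commuteD[OF commute_da_mul_y]
lemmas dy_dy = commuteD[OF commute_dy_dy]
lemmas da_da = commuteD[OF commute_da_da]
lemmas dy_da = commuteD[OF commute_dy_da]
lemmas mul_y_mul_a = commuteD[OF commute_mul_y_mul_a]

locale inverse_metric =
  fixes d :: nat and eta g :: "nat \<Rightarrow> nat \<Rightarrow> real"
  assumes eta_sym: "\<And>mu nu. mu < d \<Longrightarrow> nu < d \<Longrightarrow> eta mu nu = eta nu mu"
    and g_sym: "\<And>mu nu. mu < d \<Longrightarrow> nu < d \<Longrightarrow> g mu nu = g nu mu"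
    and eta_g: "\<And>mu rho. mu < d \<Longrightarrow> rho < d \<Longrightarrow>
      (\<Sum>nu<d. eta mu nu * g nu rho) = (if mu = rho then 1 else 0)"
begin

lemma g_eta: "mu < d \<Longrightarrow> rho < d \<Longrightarrow> (\<Sum>nu<d. g mu nu * eta nu rho) = (if mu = rho then 1 else 0)"
  using eta_g[of rho mu] by (auto simp: eta_sym g_sym mult.commute intro: sum.cong)

definition lower_y :: "nat \<Rightarrow> cpoly \<Rightarrow> cpoly" where
  "lower_y mu p = (\<Sum>nu<d. g mu nu *\<^sub>R mul_y nu p)"

definition lower_a :: "nat \<Rightarrow> cpoly \<Rightarrow> cpoly" where
  "lower_a mu p = (\<Sum>nu<d. g mu nu *\<^sub>R mul_a nu p)"

definition raise_dy :: "nat \<Rightarrow> cpoly \<Rightarrow> cpoly" where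
  "raise_dy mu p = (\<Sum>nu<d. eta mu nu *\<^sub>R dy nu p)"

definition raise_da :: "nat \<Rightarrow> cpoly \<Rightarrow> cpoly" where
  "raise_da mu p = (\<Sum>nu<d. eta mu nu *\<^sub>R da nu p)"

definition y_sq :: "cpoly \<Rightarrow> cpoly" where
  "y_sq p = (\<Sum>mu<d. mul_y mu (lower_y mu p))"

definition a_sq :: "cpoly \<Rightarrow> cpoly" where
  "a_sq p = (\<Sum>mu<d. mul_a mu (lower_a mu p))"

definition y_dot_a :: "cpoly \<Rightarrow> cpoly" where
  "y_dot_a p = (\<Sum>mu<d. mul_y mu (lower_a mu p))"

definition opE :: "cpoly \<Rightarrow> cpoly" where
  "opE p = (\<Sum>mu<d. mul_y mu (da mu p))"

definition opF :: "cpoly \<Rightarrow> cpoly" where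
  "opF p = (\<Sum>mu<d. mul_a mu (dy mu p))"

definition euler_y :: "cpoly \<Rightarrow> cpoly" where
  "euler_y p = (\<Sum>mu<d. mul_y mu (dy mu p))"

definition euler_a :: "cpoly \<Rightarrow> cpoly" where
  "euler_a p = (\<Sum>mu<d. mul_a mu (da mu p))"

lemma opBox_eq: "opBox d eta p = (\<Sum>mu<d. dy mu (raise_dy mu p))"
  by (simp add: opBox_def raise_dy_def fun_eq_iff sum_fun_apply)

lemma opT_eq: "opT d eta p = (\<Sum>mu<d. da mu (raise_da mu p))"
  by (simp add: opT_def raise_da_def fun_eq_iff sum_fun_apply)

lemma opS_eq: "opS d eta p = (\<Sum>mu<d. da mu (raise_dy mu p))"
  by (simp add: opS_def raise_dy_def fun_eq_iff sum_fun_apply)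

lemma linear_lower_y: "linear (lower_y mu)"
  unfolding lower_y_def[abs_def] by (intro linear_intros)

lemma linear_lower_a: "linear (lower_a mu)"
  unfolding lower_a_def[abs_def] by (intro linear_intros)

lemma linear_raise_dy: "linear (raise_dy mu)"
  unfolding raise_dy_def[abs_def] by (intro linear_intros)

lemma linear_raise_da: "linear (raise_da mu)"
  unfolding raise_da_def[abs_def] by (intro linear_intros)

lemmas [simp] = linear_simps[OF linear_lower_y] linear_simps[OF linear_lower_a]
  linear_simps[OF linear_raise_dy] linear_simps[OF linear_raise_da]

lemma linear_y_sq: "linear y_sq"
  by (rule linearI) (simp_all add: y_sq_def sum.distrib scaleR_sum_right)

lemma linear_a_sq: "linear a_sq"
  by (rule linearI) (simp_all add: a_sq_def sum.distrib scaleR_sum_right)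

lemma linear_y_dot_a: "linear y_dot_a"
  by (rule linearI) (simp_all add: y_dot_a_def sum.distrib scaleR_sum_right)

lemma linear_opE: "linear opE"
  by (rule linearI) (simp_all add: opE_def sum.distrib scaleR_sum_right)

lemma linear_opF: "linear opF"
  by (rule linearI) (simp_all add: opF_def sum.distrib scaleR_sum_right)

lemma linear_euler_y: "linear euler_y"
  by (rule linearI) (simp_all add: euler_y_def sum.distrib scaleR_sum_right)

lemma linear_euler_a: "linear euler_a"
  by (rule linearI) (simp_all add: euler_a_def sum.distrib scaleR_sum_right)

lemma linear_opBox: "linear (opBox d eta)"
  by (rule linearI) (simp_all add: opBox_eq sum.distrib scaleR_sum_right)

lemma linear_opT: "linear (opT d eta)"
  by (rule linearI) (simp_all add: opT_eq sum.distrib scaleR_sum_right)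

lemma linear_opS: "linear (opS d eta)"
  by (rule linearI) (simp_all add: opS_eq sum.distrib scaleR_sum_right)

lemmas [simp] = linear_simps[OF linear_y_sq] linear_simps[OF linear_a_sq]
  linear_simps[OF linear_y_dot_a] linear_simps[OF linear_opE] linear_simps[OF linear_opF]
  linear_simps[OF linear_euler_y] linear_simps[OF linear_euler_a]
  linear_simps[OF linear_opBox] linear_simps[OF linear_opT] linear_simps[OF linear_opS]

lemma commute_lower_y: "linear L \<Longrightarrow> (\<And>nu. commute L (mul_y nu)) \<Longrightarrow> commute L (lower_y mu)"
  by (simp add: commute_def lower_y_def linear_sum linear_scale)

lemma commute_lower_a: "linear L \<Longrightarrow> (\<And>nu. commute L (mul_a nu)) \<Longrightarrow> commute L (lower_a mu)"
  by (simp add: commute_def lower_a_def linear_sum linear_scale)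

lemma commute_raise_dy: "linear L \<Longrightarrow> (\<And>nu. commute L (dy nu)) \<Longrightarrow> commute L (raise_dy mu)"
  by (simp add: commute_def raise_dy_def linear_sum linear_scale)

lemma commute_raise_da: "linear L \<Longrightarrow> (\<And>nu. commute L (da nu)) \<Longrightarrow> commute L (raise_da mu)"
  by (simp add: commute_def raise_da_def linear_sum linear_scale)

lemma commute_y_sq: "linear L \<Longrightarrow> (\<And>nu. commute L (mul_y nu)) \<Longrightarrow> commute L y_sq"
  using commute_lower_y[of L] by (simp add: commute_def y_sq_def linear_sum)

lemma commute_a_sq: "linear L \<Longrightarrow> (\<And>nu. commute L (mul_a nu)) \<Longrightarrow> commute L a_sq"
  using commute_lower_a[of L] by (simp add: commute_def a_sq_def linear_sum)

lemma commute_opE: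
  "linear L \<Longrightarrow> (\<And>nu. commute L (mul_y nu)) \<Longrightarrow> (\<And>nu. commute L (da nu)) \<Longrightarrow> commute L opE"
  by (simp add: commute_def opE_def linear_sum)

lemma commute_opF:
  "linear L \<Longrightarrow> (\<And>nu. commute L (mul_a nu)) \<Longrightarrow> (\<And>nu. commute L (dy nu)) \<Longrightarrow> commute L opF"
  by (simp add: commute_def opF_def linear_sum)

lemma commute_opBox: "linear L \<Longrightarrow> (\<And>nu. commute L (dy nu)) \<Longrightarrow> commute L (opBox d eta)"
  using commute_raise_dy[of L] by (simp add: commute_def opBox_eq linear_sum)

lemma commute_opT: "linear L \<Longrightarrow> (\<And>nu. commute L (da nu)) \<Longrightarrow> commute L (opT d eta)"
  using commute_raise_da[of L] by (simp add: commute_def opT_eq linear_sum)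

lemma commute_opS:
  "linear L \<Longrightarrow> (\<And>nu. commute L (dy nu)) \<Longrightarrow> (\<And>nu. commute L (da nu)) \<Longrightarrow> commute L (opS d eta)"
  using commute_raise_dy[of L] by (simp add: commute_def opS_eq linear_sum)

lemma commute_opBox_mul_a: "commute (opBox d eta) (mul_a nu)"
  by (meson commute_sym commute_opBox linear_mul_a commute_dy_mul_a)

lemma commute_opBox_dy: "commute (opBox d eta) (dy nu)"
  by (meson commute_sym commute_opBox linear_dy commute_dy_dy)

lemma commute_opBox_da: "commute (opBox d eta) (da nu)"
  by (meson commute_sym commute_opBox linear_da commute_dy_da)

lemma commute_opT_mul_y: "commute (opT d eta) (mul_y nu)"
  by (meson commute_sym commute_opT linear_mul_y commute_da_mul_y)

lemma commute_opT_dy: "commute (opT d eta) (dy nu)"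
  by (meson commute_sym commute_opT linear_dy commute_dy_da)

lemma commute_opT_da: "commute (opT d eta) (da nu)"
  by (meson commute_sym commute_opT linear_da commute_da_da)

lemma commute_opS_dy: "commute (opS d eta) (dy nu)"
  by (meson commute_sym commute_opS linear_dy commute_dy_dy commute_dy_da)

lemma commute_opS_da: "commute (opS d eta) (da nu)"
  by (meson commute_sym commute_opS linear_da commute_da_da commute_dy_da)

section \<open>Commutation relations\<close>

lemma dy_lower_y: "mu < d \<Longrightarrow> dy mu (lower_y nu p) = lower_y nu (dy mu p) + g nu mu *\<^sub>R p"
  by (simp add: lower_y_def dy_mul_y scaleR_add_right sum.distrib)

lemma da_lower_a: "mu < d \<Longrightarrow> da mu (lower_a nu p) = lower_a nu (da mu p) + g nu mu *\<^sub>R p"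
  by (simp add: lower_a_def da_mul_a scaleR_add_right sum.distrib)

lemma dy_lower_a: "dy mu (lower_a nu p) = lower_a nu (dy mu p)"
  by (simp add: lower_a_def dy_mul_a)

lemma raise_dy_mul_y: "nu < d \<Longrightarrow> raise_dy mu (mul_y nu p) = mul_y nu (raise_dy mu p) + eta mu nu *\<^sub>R p"
  by (simp add: raise_dy_def dy_mul_y scaleR_add_right sum.distrib)

lemma raise_da_mul_a: "nu < d \<Longrightarrow> raise_da mu (mul_a nu p) = mul_a nu (raise_da mu p) + eta mu nu *\<^sub>R p"
  by (simp add: raise_da_def da_mul_a scaleR_add_right sum.distrib)

lemma raise_dy_mul_a: "raise_dy mu (mul_a nu p) = mul_a nu (raise_dy mu p)"
  by (simp add: raise_dy_def dy_mul_a)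

lemma raise_da_mul_y: "raise_da mu (mul_y nu p) = mul_y nu (raise_da mu p)"
  by (simp add: raise_da_def da_mul_y)

lemma sum_g_mul_y: "mu < d \<Longrightarrow> (\<Sum>nu<d. g nu mu *\<^sub>R mul_y nu p) = lower_y mu p"
  unfolding lower_y_def by (rule sum.cong) (auto simp: g_sym)

lemma sum_g_mul_a: "mu < d \<Longrightarrow> (\<Sum>nu<d. g nu mu *\<^sub>R mul_a nu p) = lower_a mu p"
  unfolding lower_a_def by (rule sum.cong) (auto simp: g_sym)

lemma sum_g_eta_scale:
  fixes p :: cpoly
  assumes "mu < d" "nu < d"
  shows "(\<Sum>r<d. (g nu r * eta mu r) *\<^sub>R p) = (if mu = nu then p else 0)"
proof -
  have "(\<Sum>r<d. g nu r * eta mu r) = (\<Sum>r<d. eta mu r * g r nu)"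
    using assms by (intro sum.cong) (simp_all add: g_sym)
  also have "\<dots> = (if mu = nu then 1 else 0)"
    using assms by (rule eta_g)
  finally show ?thesis
    unfolding scaleR_sum_left[symmetric] by simp
qed

lemma raise_dy_lower_y:
  "mu < d \<Longrightarrow> nu < d \<Longrightarrow> raise_dy mu (lower_y nu p) = lower_y nu (raise_dy mu p) + (if mu = nu then p else 0)"
  by (simp add: lower_y_def raise_dy_mul_y scaleR_add_right sum.distrib sum_g_eta_scale)

lemma raise_da_lower_a:
  "mu < d \<Longrightarrow> nu < d \<Longrightarrow> raise_da mu (lower_a nu p) = lower_a nu (raise_da mu p) + (if mu = nu then p else 0)"
  by (simp add: lower_a_def raise_da_mul_a scaleR_add_right sum.distrib sum_g_eta_scale)

lemma raise_dy_lower_a: "raise_dy mu (lower_a nu p) = lower_a nu (raise_dy mu p)"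
  by (simp add: lower_a_def raise_dy_mul_a)

lemma sum_eta_lower_y: "mu < d \<Longrightarrow> (\<Sum>nu<d. eta mu nu *\<^sub>R lower_y nu p) = mul_y mu p"
proof -
  assume "mu < d"
  have "(\<Sum>nu<d. eta mu nu *\<^sub>R lower_y nu p) = (\<Sum>nu<d. \<Sum>r<d. (eta mu nu * g nu r) *\<^sub>R mul_y r p)"
    by (simp add: lower_y_def scaleR_sum_right)
  also have "\<dots> = (\<Sum>r<d. (\<Sum>nu<d. eta mu nu * g nu r) *\<^sub>R mul_y r p)"
    by (subst sum.swap) (simp add: scaleR_sum_left)
  also have "\<dots> = mul_y mu p"
    using \<open>mu < d\<close> by (simp add: eta_g)
  finally show ?thesis .
qed

lemma sum_eta_lower_a: "mu < d \<Longrightarrow> (\<Sum>nu<d. eta mu nu *\<^sub>R lower_a nu p) = mul_a mu p"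
proof -
  assume "mu < d"
  have "(\<Sum>nu<d. eta mu nu *\<^sub>R lower_a nu p) = (\<Sum>nu<d. \<Sum>r<d. (eta mu nu * g nu r) *\<^sub>R mul_a r p)"
    by (simp add: lower_a_def scaleR_sum_right)
  also have "\<dots> = (\<Sum>r<d. (\<Sum>nu<d. eta mu nu * g nu r) *\<^sub>R mul_a r p)"
    by (subst sum.swap) (simp add: scaleR_sum_left)
  also have "\<dots> = mul_a mu p"
    using \<open>mu < d\<close> by (simp add: eta_g)
  finally show ?thesis .
qed

lemma dy_y_sq: "mu < d \<Longrightarrow> dy mu (y_sq p) = y_sq (dy mu p) + 2 *\<^sub>R lower_y mu p"
proof -
  assume "mu < d"
  then have "dy mu (y_sq p) = y_sq (dy mu p) + (\<Sum>nu<d. g nu mu *\<^sub>R mul_y nu p) + lower_y mu p"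
    by (simp add: y_sq_def dy_mul_y dy_lower_y sum.distrib)
  with \<open>mu < d\<close> show ?thesis
    by (simp add: sum_g_mul_y add.assoc)
qed

lemma da_a_sq: "mu < d \<Longrightarrow> da mu (a_sq p) = a_sq (da mu p) + 2 *\<^sub>R lower_a mu p"
proof -
  assume "mu < d"
  then have "da mu (a_sq p) = a_sq (da mu p) + (\<Sum>nu<d. g nu mu *\<^sub>R mul_a nu p) + lower_a mu p"
    by (simp add: a_sq_def da_mul_a da_lower_a sum.distrib)
  with \<open>mu < d\<close> show ?thesis
    by (simp add: sum_g_mul_a add.assoc)
qed

lemma raise_dy_y_sq: "mu < d \<Longrightarrow> raise_dy mu (y_sq p) = y_sq (raise_dy mu p) + 2 *\<^sub>R mul_y mu p"
proof -
  assume "mu < d"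
  then have "raise_dy mu (y_sq p) = y_sq (raise_dy mu p) + mul_y mu p + (\<Sum>nu<d. eta mu nu *\<^sub>R lower_y nu p)"
    by (simp add: y_sq_def raise_dy_mul_y raise_dy_lower_y sum.distrib)
  with \<open>mu < d\<close> show ?thesis
    by (simp add: sum_eta_lower_y add.assoc)
qed

lemma raise_da_a_sq: "mu < d \<Longrightarrow> raise_da mu (a_sq p) = a_sq (raise_da mu p) + 2 *\<^sub>R mul_a mu p"
proof -
  assume "mu < d"
  then have "raise_da mu (a_sq p) = a_sq (raise_da mu p) + mul_a mu p + (\<Sum>nu<d. eta mu nu *\<^sub>R lower_a nu p)"
    by (simp add: a_sq_def raise_da_mul_a raise_da_lower_a sum.distrib)
  with \<open>mu < d\<close> show ?thesis
    by (simp add: sum_eta_lower_a add.assoc)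
qed

lemma dy_y_dot_a: "mu < d \<Longrightarrow> dy mu (y_dot_a p) = y_dot_a (dy mu p) + lower_a mu p"
  by (simp add: y_dot_a_def dy_mul_y dy_lower_a sum.distrib)

lemma da_y_dot_a: "mu < d \<Longrightarrow> da mu (y_dot_a p) = y_dot_a (da mu p) + lower_y mu p"
  by (simp add: y_dot_a_def da_mul_y da_lower_a sum.distrib sum_g_mul_y)

lemma raise_dy_y_dot_a: "mu < d \<Longrightarrow> raise_dy mu (y_dot_a p) = y_dot_a (raise_dy mu p) + mul_a mu p"
  by (simp add: y_dot_a_def raise_dy_mul_y raise_dy_lower_a sum.distrib sum_eta_lower_a)

lemma raise_da_y_dot_a: "mu < d \<Longrightarrow> raise_da mu (y_dot_a p) = y_dot_a (raise_da mu p) + mul_y mu p"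
  by (simp add: y_dot_a_def raise_da_mul_y raise_da_lower_a sum.distrib)

lemma sum_g_eta_contract:
  assumes "\<And>nu. linear (X nu)"
  shows "(\<Sum>mu<d. \<Sum>nu<d. g mu nu *\<^sub>R X nu (\<Sum>r<d. eta mu r *\<^sub>R D r p)) = (\<Sum>nu<d. X nu (D nu p))"
proof -
  have "(\<Sum>mu<d. \<Sum>nu<d. g mu nu *\<^sub>R X nu (\<Sum>r<d. eta mu r *\<^sub>R D r p))
      = (\<Sum>mu<d. \<Sum>nu<d. \<Sum>r<d. (g mu nu * eta mu r) *\<^sub>R X nu (D r p))"
    by (simp add: linear_sum[OF assms] linear_scale[OF assms] scaleR_sum_right)
  also have "\<dots> = (\<Sum>nu<d. \<Sum>r<d. \<Sum>mu<d. (g mu nu * eta mu r) *\<^sub>R X nu (D r p))"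
    by (subst sum.swap, rule sum.cong[OF refl], rule sum.swap)
  also have "\<dots> = (\<Sum>nu<d. \<Sum>r<d. (\<Sum>mu<d. g nu mu * eta mu r) *\<^sub>R X nu (D r p))"
    by (intro sum.cong refl) (auto simp: scaleR_sum_left g_sym intro!: sum.cong)
  also have "\<dots> = (\<Sum>nu<d. X nu (D nu p))"
    by (simp add: g_eta)
  finally show ?thesis .
qed

lemma sum_lower_y_raise_dy: "(\<Sum>mu<d. lower_y mu (raise_dy mu p)) = euler_y p"
  unfolding lower_y_def raise_dy_def euler_y_def by (rule sum_g_eta_contract[OF linear_mul_y])

lemma sum_lower_a_raise_da: "(\<Sum>mu<d. lower_a mu (raise_da mu p)) = euler_a p"
  unfolding lower_a_def raise_da_def euler_a_def by (rule sum_g_eta_contract[OF linear_mul_a])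

lemma sum_lower_y_raise_da: "(\<Sum>mu<d. lower_y mu (raise_da mu p)) = opE p"
  unfolding lower_y_def raise_da_def opE_def by (rule sum_g_eta_contract[OF linear_mul_y])

lemma sum_lower_a_raise_dy: "(\<Sum>mu<d. lower_a mu (raise_dy mu p)) = opF p"
  unfolding lower_a_def raise_dy_def opF_def by (rule sum_g_eta_contract[OF linear_mul_a])

lemma sum_raise_dy_da: "(\<Sum>nu<d. raise_dy nu (da nu p)) = opS d eta p"
  by (simp add: opS_eq raise_dy_def dy_da)

lemma sum_raise_da_dy: "(\<Sum>nu<d. raise_da nu (dy nu p)) = opS d eta p"
proof -
  have "(\<Sum>nu<d. raise_da nu (dy nu p)) = (\<Sum>nu<d. \<Sum>r<d. eta nu r *\<^sub>R da r (dy nu p))"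
    by (simp add: raise_da_def)
  also have "\<dots> = (\<Sum>r<d. \<Sum>nu<d. eta r nu *\<^sub>R da r (dy nu p))"
    by (subst sum.swap) (auto simp: eta_sym intro!: sum.cong)
  also have "\<dots> = opS d eta p"
    by (simp add: opS_eq raise_dy_def)
  finally show ?thesis .
qed

lemma sum_raise_dy_dy: "(\<Sum>nu<d. raise_dy nu (dy nu p)) = opBox d eta p"
  by (simp add: opBox_eq raise_dy_def dy_dy)

lemma sum_raise_da_da: "(\<Sum>nu<d. raise_da nu (da nu p)) = opT d eta p"
  by (simp add: opT_eq raise_da_def da_da)

lemma sum_eta_dy: "nu < d \<Longrightarrow> (\<Sum>mu<d. eta mu nu *\<^sub>R dy mu q) = raise_dy nu q"
  unfolding raise_dy_def by (rule sum.cong) (auto simp: eta_sym)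

lemma sum_eta_da: "nu < d \<Longrightarrow> (\<Sum>mu<d. eta mu nu *\<^sub>R da mu q) = raise_da nu q"
  unfolding raise_da_def by (rule sum.cong) (auto simp: eta_sym)

lemma opBox_mul_y: "nu < d \<Longrightarrow> opBox d eta (mul_y nu q) = mul_y nu (opBox d eta q) + 2 *\<^sub>R raise_dy nu q"
  by (simp add: opBox_eq raise_dy_mul_y dy_mul_y sum.distrib sum_eta_dy add.assoc)

lemma opT_mul_a: "nu < d \<Longrightarrow> opT d eta (mul_a nu q) = mul_a nu (opT d eta q) + 2 *\<^sub>R raise_da nu q"
  by (simp add: opT_eq raise_da_mul_a da_mul_a sum.distrib sum_eta_da add.assoc)

lemma opS_mul_a: "nu < d \<Longrightarrow> opS d eta (mul_a nu q) = mul_a nu (opS d eta q) + raise_dy nu q"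
  by (simp add: opS_eq raise_dy_mul_a da_mul_a sum.distrib)

lemma opS_mul_y: "nu < d \<Longrightarrow> opS d eta (mul_y nu q) = mul_y nu (opS d eta q) + raise_da nu q"
  by (simp add: opS_eq raise_dy_mul_y da_mul_y sum.distrib sum_eta_da)

lemma opBox_y_dot_a: "opBox d eta (y_dot_a p) = y_dot_a (opBox d eta p) + 2 *\<^sub>R opF p"
proof -
  have "opBox d eta (y_dot_a p) = y_dot_a (opBox d eta p) + (\<Sum>mu<d. lower_a mu (raise_dy mu p)) + opF p"
    by (simp add: opBox_eq opF_def raise_dy_y_dot_a dy_y_dot_a dy_mul_a sum.distrib)
  then show ?thesis
    by (simp add: sum_lower_a_raise_dy add.assoc)
qed

lemma opT_y_dot_a: "opT d eta (y_dot_a p) = y_dot_a (opT d eta p) + 2 *\<^sub>R opE p"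
proof -
  have "opT d eta (y_dot_a p) = y_dot_a (opT d eta p) + (\<Sum>mu<d. lower_y mu (raise_da mu p)) + opE p"
    by (simp add: opT_eq opE_def raise_da_y_dot_a da_y_dot_a da_mul_y sum.distrib)
  then show ?thesis
    by (simp add: sum_lower_y_raise_da add.assoc)
qed

lemma opBox_y_sq: "opBox d eta (y_sq p) = y_sq (opBox d eta p) + 4 *\<^sub>R euler_y p + (2 * real d) *\<^sub>R p"
proof -
  have "opBox d eta (y_sq p) = y_sq (opBox d eta p) + 2 *\<^sub>R (\<Sum>mu<d. lower_y mu (raise_dy mu p))
      + 2 *\<^sub>R euler_y p + (2 * real d) *\<^sub>R p"
    by (simp add: opBox_eq euler_y_def raise_dy_y_sq dy_y_sq dy_mul_y scaleR_add_right sum.distrib scaleR_sum_right)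
  then show ?thesis
    by (simp add: sum_lower_y_raise_dy flip: scaleR_add_left)
qed

lemma opT_a_sq: "opT d eta (a_sq p) = a_sq (opT d eta p) + 4 *\<^sub>R euler_a p + (2 * real d) *\<^sub>R p"
proof -
  have "opT d eta (a_sq p) = a_sq (opT d eta p) + 2 *\<^sub>R (\<Sum>mu<d. lower_a mu (raise_da mu p))
      + 2 *\<^sub>R euler_a p + (2 * real d) *\<^sub>R p"
    by (simp add: opT_eq euler_a_def raise_da_a_sq da_a_sq da_mul_a scaleR_add_right sum.distrib scaleR_sum_right)
  then show ?thesis
    by (simp add: sum_lower_a_raise_da flip: scaleR_add_left)
qed

lemma opS_y_dot_a: "opS d eta (y_dot_a p) = y_dot_a (opS d eta p) + euler_y p + euler_a p + real d *\<^sub>R p"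
proof -
  have "opS d eta (y_dot_a p) = y_dot_a (opS d eta p) + (\<Sum>mu<d. lower_y mu (raise_dy mu p))
      + euler_a p + real d *\<^sub>R p"
    by (simp add: opS_eq euler_a_def raise_dy_y_dot_a da_y_dot_a da_mul_a sum.distrib)
  then show ?thesis
    by (simp add: sum_lower_y_raise_dy)
qed

lemma da_y_sq: "da mu (y_sq p) = y_sq (da mu p)"
  using commute_y_sq[OF linear_da] by (simp add: commute_def da_mul_y)

lemma raise_dy_a_sq: "raise_dy mu (a_sq p) = a_sq (raise_dy mu p)"
  using commute_a_sq[OF linear_raise_dy] by (simp add: commute_def raise_dy_mul_a)

lemma mul_y_a_sq: "mul_y mu (a_sq p) = a_sq (mul_y mu p)"
  using commute_a_sq[OF linear_mul_y] by (simp add: commute_def mul_y_mul_a)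

lemma opS_y_sq: "opS d eta (y_sq p) = y_sq (opS d eta p) + 2 *\<^sub>R opE p"
  by (simp add: opS_eq opE_def raise_dy_y_sq da_y_sq da_mul_y sum.distrib scaleR_sum_right)

lemma opS_a_sq: "opS d eta (a_sq p) = a_sq (opS d eta p) + 2 *\<^sub>R opF p"
proof -
  have "opS d eta (a_sq p) = a_sq (opS d eta p) + 2 *\<^sub>R (\<Sum>mu<d. lower_a mu (raise_dy mu p))"
    by (simp add: opS_eq raise_dy_a_sq da_a_sq sum.distrib scaleR_sum_right)
  then show ?thesis
    by (simp add: sum_lower_a_raise_dy)
qed

lemma opBox_opE: "opBox d eta (opE p) = opE (opBox d eta p) + 2 *\<^sub>R opS d eta p"
proof -
  have "opBox d eta (opE p) = opE (opBox d eta p) + 2 *\<^sub>R (\<Sum>nu<d. raise_dy nu (da nu p))"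
    by (simp add: opE_def opBox_mul_y commuteD[OF commute_opBox_da] sum.distrib scaleR_sum_right)
  then show ?thesis
    by (simp add: sum_raise_dy_da)
qed

lemma opT_opF: "opT d eta (opF p) = opF (opT d eta p) + 2 *\<^sub>R opS d eta p"
proof -
  have "opT d eta (opF p) = opF (opT d eta p) + 2 *\<^sub>R (\<Sum>nu<d. raise_da nu (dy nu p))"
    by (simp add: opF_def opT_mul_a commuteD[OF commute_opT_dy] sum.distrib scaleR_sum_right)
  then show ?thesis
    by (simp add: sum_raise_da_dy)
qed

lemma opS_opF: "opS d eta (opF p) = opF (opS d eta p) + opBox d eta p"
proof -
  have "opS d eta (opF p) = opF (opS d eta p) + (\<Sum>nu<d. raise_dy nu (dy nu p))"
    by (simp add: opF_def opS_mul_a commuteD[OF commute_opS_dy] sum.distrib)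
  then show ?thesis
    by (simp add: sum_raise_dy_dy)
qed

lemma opS_opE: "opS d eta (opE p) = opE (opS d eta p) + opT d eta p"
proof -
  have "opS d eta (opE p) = opE (opS d eta p) + (\<Sum>nu<d. raise_da nu (da nu p))"
    by (simp add: opE_def opS_mul_y commuteD[OF commute_opS_da] sum.distrib)
  then show ?thesis
    by (simp add: sum_raise_da_da)
qed

lemma opE_a_sq: "opE (a_sq p) = a_sq (opE p) + 2 *\<^sub>R y_dot_a p"
  by (simp add: opE_def y_dot_a_def da_a_sq mul_y_a_sq sum.distrib scaleR_sum_right)

lemma opE_opF: "opE (opF p) = opF (opE p) + euler_y p - euler_a p"
proof -
  have "opE (opF p) = (\<Sum>mu<d. \<Sum>nu<d. mul_y mu (mul_a nu (da mu (dy nu p)))) + euler_y p"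
    by (simp add: opE_def opF_def euler_y_def da_mul_a sum.distrib)
  moreover have "opF (opE p) = (\<Sum>nu<d. \<Sum>mu<d. mul_a nu (mul_y mu (dy nu (da mu p)))) + euler_a p"
    by (simp add: opE_def opF_def euler_a_def dy_mul_y sum.distrib)
  moreover have "(\<Sum>nu<d. \<Sum>mu<d. mul_a nu (mul_y mu (dy nu (da mu p))))
      = (\<Sum>mu<d. \<Sum>nu<d. mul_y mu (mul_a nu (da mu (dy nu p))))"
    by (subst sum.swap) (simp add: mul_y_mul_a dy_da)
  ultimately show ?thesis
    by simp
qed

lemma opBox_a_sq: "opBox d eta (a_sq p) = a_sq (opBox d eta p)"
  using commute_a_sq[OF linear_opBox commute_opBox_mul_a] by (simp add: commute_def)

lemma opT_y_sq: "opT d eta (y_sq p) = y_sq (opT d eta p)"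
  using commute_y_sq[OF linear_opT commute_opT_mul_y] by (simp add: commute_def)

lemma opBox_opF: "opBox d eta (opF p) = opF (opBox d eta p)"
  using commute_opF[OF linear_opBox commute_opBox_mul_a commute_opBox_dy] by (simp add: commute_def)

lemma opT_opE: "opT d eta (opE p) = opE (opT d eta p)"
  using commute_opE[OF linear_opT commute_opT_mul_y commute_opT_da] by (simp add: commute_def)

lemma opBox_opS: "opBox d eta (opS d eta p) = opS d eta (opBox d eta p)"
  using commute_opS[OF linear_opBox commute_opBox_dy commute_opBox_da] by (simp add: commute_def)

lemma opT_opS: "opT d eta (opS d eta p) = opS d eta (opT d eta p)"
  using commute_opS[OF linear_opT commute_opT_dy commute_opT_da] by (simp add: commute_def)

section \<open>Bidegree\<close>

definition deg :: "(nat \<Rightarrow> nat) \<Rightarrow> nat" where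
  "deg al = (\<Sum>i<d. al i)"

definition bihomogeneous :: "int \<Rightarrow> int \<Rightarrow> cpoly set" where
  "bihomogeneous m n = {p. \<forall>al be. int (deg al) \<noteq> m \<or> int (deg be) \<noteq> n \<longrightarrow> p al be = 0}"

definition vars_lt_d :: "cpoly set" where
  "vars_lt_d = {p. \<forall>al be. (\<exists>i\<ge>d. al i \<noteq> 0 \<or> be i \<noteq> 0) \<longrightarrow> p al be = 0}"

lemma deg_upd:
  assumes "mu < d"
  shows "int (deg (al(mu := k))) = int (deg al) - int (al mu) + int k"
proof -
  have "deg (al(mu := k)) = k + (\<Sum>i\<in>{..<d} - {mu}. al i)"
    unfolding deg_def using assms by (subst sum.remove[of _ mu]) (auto intro!: sum.cong)
  moreover have "deg al = al mu + (\<Sum>i\<in>{..<d} - {mu}. al i)"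
    unfolding deg_def using assms by (subst sum.remove[of _ mu]) auto
  ultimately show ?thesis
    by simp
qed

lemma bihomogeneousI:
  "(\<And>al be. p al be \<noteq> 0 \<Longrightarrow> int (deg al) = m \<and> int (deg be) = n) \<Longrightarrow> p \<in> bihomogeneous m n"
  unfolding bihomogeneous_def by blast

lemma bihomogeneousD:
  "p \<in> bihomogeneous m n \<Longrightarrow> p al be \<noteq> 0 \<Longrightarrow> int (deg al) = m \<and> int (deg be) = n"
  unfolding bihomogeneous_def by blast

lemma subspace_bihomogeneous: "subspace (bihomogeneous m n)"
  unfolding subspace_def bihomogeneous_def by auto

lemma subspace_vars_lt_d: "subspace vars_lt_d"
  unfolding subspace_def vars_lt_d_def by auto

lemma bihomogeneous_negative_eq_0: "p \<in> bihomogeneous m n \<Longrightarrow> m < 0 \<or> n < 0 \<Longrightarrow> p = 0"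
  unfolding bihomogeneous_def by (auto simp: fun_eq_iff)

lemma mul_y_bihomogeneous:
  assumes mu: "mu < d" and p: "p \<in> bihomogeneous m n"
  shows "mul_y mu p \<in> bihomogeneous (m + 1) n"
proof (rule bihomogeneousI)
  fix al be
  assume "mul_y mu p al be \<noteq> 0"
  then have "al mu \<noteq> 0" and "p (al(mu := al mu - 1)) be \<noteq> 0"
    by (auto simp: mul_y_def split: if_splits)
  with p deg_upd[OF mu, of al "al mu - 1"] show "int (deg al) = m + 1 \<and> int (deg be) = n"
    by (auto dest: bihomogeneousD)
qed

lemma mul_a_bihomogeneous:
  assumes mu: "mu < d" and p: "p \<in> bihomogeneous m n"
  shows "mul_a mu p \<in> bihomogeneous m (n + 1)"
proof (rule bihomogeneousI)
  fix al be
  assume "mul_a mu p al be \<noteq> 0"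
  then have "be mu \<noteq> 0" and "p al (be(mu := be mu - 1)) \<noteq> 0"
    by (auto simp: mul_a_def split: if_splits)
  with p deg_upd[OF mu, of be "be mu - 1"] show "int (deg al) = m \<and> int (deg be) = n + 1"
    by (auto dest: bihomogeneousD)
qed

lemma dy_bihomogeneous:
  assumes mu: "mu < d" and p: "p \<in> bihomogeneous m n"
  shows "dy mu p \<in> bihomogeneous (m - 1) n"
proof (rule bihomogeneousI)
  fix al be
  assume "dy mu p al be \<noteq> 0"
  then have "p (al(mu := Suc (al mu))) be \<noteq> 0"
    by (simp add: dy_def)
  with p deg_upd[OF mu, of al "Suc (al mu)"] show "int (deg al) = m - 1 \<and> int (deg be) = n"
    by (auto dest: bihomogeneousD)
qed

lemma da_bihomogeneous:
  assumes mu: "mu < d" and p: "p \<in> bihomogeneous m n"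
  shows "da mu p \<in> bihomogeneous m (n - 1)"
proof (rule bihomogeneousI)
  fix al be
  assume "da mu p al be \<noteq> 0"
  then have "p al (be(mu := Suc (be mu))) \<noteq> 0"
    by (simp add: da_def)
  with p deg_upd[OF mu, of be "Suc (be mu)"] show "int (deg al) = m \<and> int (deg be) = n - 1"
    by (auto dest: bihomogeneousD)
qed

lemmas bihomogeneous_closed = subspace_sum[OF subspace_bihomogeneous] subspace_scale[OF subspace_bihomogeneous]
  subspace_add[OF subspace_bihomogeneous]

lemma lower_y_bihomogeneous: "p \<in> bihomogeneous m n \<Longrightarrow> lower_y mu p \<in> bihomogeneous (m + 1) n"
  unfolding lower_y_def by (intro bihomogeneous_closed mul_y_bihomogeneous) auto

lemma lower_a_bihomogeneous: "p \<in> bihomogeneous m n \<Longrightarrow> lower_a mu p \<in> bihomogeneous m (n + 1)"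
  unfolding lower_a_def by (intro bihomogeneous_closed mul_a_bihomogeneous) auto

lemma raise_dy_bihomogeneous: "p \<in> bihomogeneous m n \<Longrightarrow> raise_dy mu p \<in> bihomogeneous (m - 1) n"
  unfolding raise_dy_def by (intro bihomogeneous_closed dy_bihomogeneous) auto

lemma y_sq_bihomogeneous: "p \<in> bihomogeneous m n \<Longrightarrow> y_sq p \<in> bihomogeneous (m + 2) n"
  unfolding y_sq_def using mul_y_bihomogeneous[where m = "m + 1" and n = n] lower_y_bihomogeneous[of p m n]
  by (auto intro!: bihomogeneous_closed simp: add.assoc)

lemma a_sq_bihomogeneous: "p \<in> bihomogeneous m n \<Longrightarrow> a_sq p \<in> bihomogeneous m (n + 2)"
  unfolding a_sq_def using mul_a_bihomogeneous[where m = m and n = "n + 1"] lower_a_bihomogeneous[of p m n]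
  by (auto intro!: bihomogeneous_closed simp: add.assoc)

lemma y_dot_a_bihomogeneous: "p \<in> bihomogeneous m n \<Longrightarrow> y_dot_a p \<in> bihomogeneous (m + 1) (n + 1)"
  unfolding y_dot_a_def using mul_y_bihomogeneous[where m = m and n = "n + 1"] lower_a_bihomogeneous[of p m n]
  by (auto intro!: bihomogeneous_closed)

lemma opE_bihomogeneous: "p \<in> bihomogeneous m n \<Longrightarrow> opE p \<in> bihomogeneous (m + 1) (n - 1)"
  unfolding opE_def using mul_y_bihomogeneous[where m = m and n = "n - 1"] da_bihomogeneous[of _ p m n]
  by (auto intro!: bihomogeneous_closed)

lemma opF_bihomogeneous: "p \<in> bihomogeneous m n \<Longrightarrow> opF p \<in> bihomogeneous (m - 1) (n + 1)"
  unfolding opF_def using mul_a_bihomogeneous[where m = "m - 1" and n = n] dy_bihomogeneous[of _ p m n]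
  by (auto intro!: bihomogeneous_closed)

lemma opS_bihomogeneous: "p \<in> bihomogeneous m n \<Longrightarrow> opS d eta p \<in> bihomogeneous (m - 1) (n - 1)"
  unfolding opS_eq using da_bihomogeneous[where m = "m - 1" and n = n] raise_dy_bihomogeneous[of p m n]
  by (auto intro!: bihomogeneous_closed)

lemma mul_y_dy_apply: "mul_y mu (dy mu p) al be = real (al mu) * p al be"
  by (auto simp: mul_y_def dy_def)

lemma mul_a_da_apply: "mul_a mu (da mu p) al be = real (be mu) * p al be"
  by (auto simp: mul_a_def da_def)

lemma euler_y_apply: "euler_y p al be = real (deg al) * p al be"
  by (simp add: euler_y_def deg_def sum_fun_apply mul_y_dy_apply sum_distrib_right)

lemma euler_a_apply: "euler_a p al be = real (deg be) * p al be"
  by (simp add: euler_a_def deg_def sum_fun_apply mul_a_da_apply sum_distrib_right)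

lemma euler_y_bihomogeneous: "p \<in> bihomogeneous m n \<Longrightarrow> euler_y p = of_int m *\<^sub>R p"
  by (auto simp: fun_eq_iff euler_y_apply dest: bihomogeneousD)

lemma euler_a_bihomogeneous: "p \<in> bihomogeneous m n \<Longrightarrow> euler_a p = of_int n *\<^sub>R p"
  by (auto simp: fun_eq_iff euler_a_apply dest: bihomogeneousD)

lemma vars_lt_dI: "(\<And>al be. p al be \<noteq> 0 \<Longrightarrow> \<forall>i\<ge>d. al i = 0 \<and> be i = 0) \<Longrightarrow> p \<in> vars_lt_d"
  unfolding vars_lt_d_def by fastforce

lemma vars_lt_dD: "p \<in> vars_lt_d \<Longrightarrow> p al be \<noteq> 0 \<Longrightarrow> \<forall>i\<ge>d. al i = 0 \<and> be i = 0"
  unfolding vars_lt_d_def mem_Collect_eq by blast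

lemma mul_y_vars_lt_d:
  assumes "mu < d" "p \<in> vars_lt_d"
  shows "mul_y mu p \<in> vars_lt_d"
proof (rule vars_lt_dI)
  fix al be
  assume "mul_y mu p al be \<noteq> 0"
  then have "p (al(mu := al mu - 1)) be \<noteq> 0"
    by (simp add: mul_y_def split: if_splits)
  with assms show "\<forall>i\<ge>d. al i = 0 \<and> be i = 0"
    by (auto dest!: vars_lt_dD)
qed

lemma mul_a_vars_lt_d:
  assumes "mu < d" "p \<in> vars_lt_d"
  shows "mul_a mu p \<in> vars_lt_d"
proof (rule vars_lt_dI)
  fix al be
  assume "mul_a mu p al be \<noteq> 0"
  then have "p al (be(mu := be mu - 1)) \<noteq> 0"
    by (simp add: mul_a_def split: if_splits)
  with assms show "\<forall>i\<ge>d. al i = 0 \<and> be i = 0"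
    by (auto dest!: vars_lt_dD)
qed

lemma dy_vars_lt_d:
  assumes "p \<in> vars_lt_d"
  shows "dy mu p \<in> vars_lt_d"
proof (rule vars_lt_dI)
  fix al be
  assume "dy mu p al be \<noteq> 0"
  then have "p (al(mu := Suc (al mu))) be \<noteq> 0"
    by (simp add: dy_def)
  with assms show "\<forall>i\<ge>d. al i = 0 \<and> be i = 0"
    by (force dest!: vars_lt_dD split: if_splits)
qed

lemma da_vars_lt_d:
  assumes "p \<in> vars_lt_d"
  shows "da mu p \<in> vars_lt_d"
proof (rule vars_lt_dI)
  fix al be
  assume "da mu p al be \<noteq> 0"
  then have "p al (be(mu := Suc (be mu))) \<noteq> 0"
    by (simp add: da_def)
  with assms show "\<forall>i\<ge>d. al i = 0 \<and> be i = 0"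
    by (force dest!: vars_lt_dD split: if_splits)
qed

lemmas vars_lt_d_closed = subspace_sum[OF subspace_vars_lt_d] subspace_scale[OF subspace_vars_lt_d]
  subspace_add[OF subspace_vars_lt_d] subspace_diff[OF subspace_vars_lt_d]

lemma lower_y_vars_lt_d: "p \<in> vars_lt_d \<Longrightarrow> lower_y mu p \<in> vars_lt_d"
  unfolding lower_y_def by (auto intro!: vars_lt_d_closed mul_y_vars_lt_d)

lemma lower_a_vars_lt_d: "p \<in> vars_lt_d \<Longrightarrow> lower_a mu p \<in> vars_lt_d"
  unfolding lower_a_def by (auto intro!: vars_lt_d_closed mul_a_vars_lt_d)

lemma y_sq_vars_lt_d: "p \<in> vars_lt_d \<Longrightarrow> y_sq p \<in> vars_lt_d"
  unfolding y_sq_def by (auto intro!: vars_lt_d_closed mul_y_vars_lt_d lower_y_vars_lt_d)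

lemma a_sq_vars_lt_d: "p \<in> vars_lt_d \<Longrightarrow> a_sq p \<in> vars_lt_d"
  unfolding a_sq_def by (auto intro!: vars_lt_d_closed mul_a_vars_lt_d lower_a_vars_lt_d)

lemma y_dot_a_vars_lt_d: "p \<in> vars_lt_d \<Longrightarrow> y_dot_a p \<in> vars_lt_d"
  unfolding y_dot_a_def by (auto intro!: vars_lt_d_closed mul_y_vars_lt_d lower_a_vars_lt_d)

lemma opE_vars_lt_d: "p \<in> vars_lt_d \<Longrightarrow> opE p \<in> vars_lt_d"
  unfolding opE_def by (auto intro!: vars_lt_d_closed mul_y_vars_lt_d da_vars_lt_d)

lemma opF_vars_lt_d: "p \<in> vars_lt_d \<Longrightarrow> opF p \<in> vars_lt_d"
  unfolding opF_def by (auto intro!: vars_lt_d_closed mul_a_vars_lt_d dy_vars_lt_d)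

lemma opS_vars_lt_d: "p \<in> vars_lt_d \<Longrightarrow> opS d eta p \<in> vars_lt_d"
  unfolding opS_eq raise_dy_def by (auto intro!: vars_lt_d_closed da_vars_lt_d dy_vars_lt_d)

definition harmonic :: "cpoly set" where
  "harmonic = {p. opBox d eta p = 0 \<and> opT d eta p = 0}"

lemma opS_harmonic: "p \<in> harmonic \<Longrightarrow> opS d eta p \<in> harmonic"
  by (simp add: harmonic_def opBox_opS opT_opS)

definition raise_comb :: "real \<Rightarrow> real \<Rightarrow> real \<Rightarrow> real \<Rightarrow> cpoly \<Rightarrow> cpoly" where
  "raise_comb x1 x2 x3 x4 s = x1 *\<^sub>R y_dot_a s + x2 *\<^sub>R y_sq (opF s) + x3 *\<^sub>R a_sq (opE s)
     + x4 *\<^sub>R y_sq (a_sq (opS d eta s))"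

lemma linear_raise_comb: "linear (raise_comb x1 x2 x3 x4)"
  by (rule linearI) (simp_all add: raise_comb_def algebra_simps)

lemmas [simp] = linear_simps[OF linear_raise_comb]

definition psi_comb :: "real \<Rightarrow> real \<Rightarrow> real \<Rightarrow> real \<Rightarrow> real \<Rightarrow> real \<Rightarrow> real \<Rightarrow> cpoly \<Rightarrow> cpoly" where
  "psi_comb A B1 B2 x1 x2 x3 x4 f =
     A *\<^sub>R f - B1 *\<^sub>R opE (opF f) - B2 *\<^sub>R opF (opE f) + raise_comb x1 x2 x3 x4 (opS d eta f)"

lemma opS_raise_comb:
  assumes s: "s \<in> bihomogeneous m n" "s \<in> harmonic"
  shows "opS d eta (raise_comb x1 x2 x3 x4 s) =
    psi_comb ((of_int m + of_int n + real d) * x1) (- 2 * x2) (- 2 * x3) (x1 + 4 * x4) (x2 + 2 * x4)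
      (x3 + 2 * x4) x4 s"
proof -
  have "opS d eta (y_dot_a s) = y_dot_a (opS d eta s) + (of_int m + of_int n + real d) *\<^sub>R s"
    using s by (simp add: opS_y_dot_a euler_y_bihomogeneous euler_a_bihomogeneous algebra_simps)
  moreover have "opS d eta (y_sq (opF s)) = y_sq (opF (opS d eta s)) + 2 *\<^sub>R opE (opF s)"
    using s by (simp add: harmonic_def opS_y_sq opS_opF)
  moreover have "opS d eta (a_sq (opE s)) = a_sq (opE (opS d eta s)) + 2 *\<^sub>R opF (opE s)"
    using s by (simp add: harmonic_def opS_a_sq opS_opE)
  moreover have "opS d eta (y_sq (a_sq (opS d eta s))) = y_sq (a_sq (opS d eta (opS d eta s)))
      + 2 *\<^sub>R y_sq (opF (opS d eta s)) + 2 *\<^sub>R a_sq (opE (opS d eta s)) + 4 *\<^sub>R y_dot_a (opS d eta s)"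
    by (simp add: opS_y_sq opS_a_sq opE_a_sq algebra_simps)
  ultimately show ?thesis
    by (simp add: raise_comb_def psi_comb_def algebra_simps)
qed

lemma opS_psi_comb:
  assumes f: "f \<in> bihomogeneous m n" "f \<in> harmonic"
  shows "opS d eta (psi_comb A B1 B2 x1 x2 x3 x4 f) =
    psi_comb (A - 2 * B1 - 2 * B2 + (of_int m + of_int n - 2 + real d) * x1) (B1 - 2 * x2) (B2 - 2 * x3)
      (x1 + 4 * x4) (x2 + 2 * x4) (x3 + 2 * x4) x4 (opS d eta f)"
proof -
  have "opS d eta (opE (opF f)) = opE (opF (opS d eta f)) + 2 *\<^sub>R opS d eta f"
    using f by (simp add: harmonic_def opS_opE opS_opF opT_opF)
  moreover have "opS d eta (opF (opE f)) = opF (opE (opS d eta f)) + 2 *\<^sub>R opS d eta f"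
    using f by (simp add: harmonic_def opS_opE opS_opF opBox_opE)
  moreover have "opS d eta (raise_comb x1 x2 x3 x4 (opS d eta f)) =
    psi_comb ((of_int (m - 1) + of_int (n - 1) + real d) * x1) (- 2 * x2) (- 2 * x3) (x1 + 4 * x4)
      (x2 + 2 * x4) (x3 + 2 * x4) x4 (opS d eta f)"
    using f by (intro opS_raise_comb opS_bihomogeneous opS_harmonic)
  ultimately show ?thesis
    by (simp add: psi_comb_def algebra_simps)
qed

definition harm_const :: "int \<Rightarrow> real" where
  "harm_const m = 2 * of_int m + real d - 2"

text \<open>The coefficients of \<open>lift\<close> are chosen so that \<open>opBox\<close> and \<open>opT\<close> annihilate it on
  harmonic polynomials of bidegree \<open>(m, n)\<close> (\<open>lift_harmonic\<close>).\<close>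

definition lift :: "int \<Rightarrow> int \<Rightarrow> cpoly \<Rightarrow> cpoly" where
  "lift m n = raise_comb (harm_const m * harm_const n) (- harm_const n) (- harm_const m) 1"

text \<open>Closed form of the coefficients obtained by iterating \<open>opS_psi_comb\<close> starting from
  \<open>opS \<circ> lift\<close> (see \<open>opS_lift\<close> and \<open>opS_psi\<close>).\<close>

definition psi :: "real \<Rightarrow> real \<Rightarrow> nat \<Rightarrow> cpoly \<Rightarrow> cpoly" where
  "psi a b k = psi_comb ((real k + 1) * (a * b * ((a + b) / 2 - real k + 2) - (a + b) * real k))
     (2 * (real k + 1) * (b - real k)) (2 * (real k + 1) * (a - real k))
     (a * b + 4 * (real k + 1)) (2 * (real k + 1) - b) (2 * (real k + 1) - a) 1"

lemma opBox_y_sq_bihomogeneous: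
  "p \<in> bihomogeneous m n \<Longrightarrow> opBox d eta (y_sq p) = y_sq (opBox d eta p) + (2 * harm_const (m + 1)) *\<^sub>R p"
  by (simp add: opBox_y_sq euler_y_bihomogeneous harm_const_def algebra_simps)

lemma opT_a_sq_bihomogeneous:
  "p \<in> bihomogeneous m n \<Longrightarrow> opT d eta (a_sq p) = a_sq (opT d eta p) + (2 * harm_const (n + 1)) *\<^sub>R p"
  by (simp add: opT_a_sq euler_a_bihomogeneous harm_const_def algebra_simps)

lemma lift_bihomogeneous: "f \<in> bihomogeneous m n \<Longrightarrow> lift m n f \<in> bihomogeneous (m + 1) (n + 1)"
  unfolding lift_def raise_comb_def
  using y_dot_a_bihomogeneous[of f m n] y_sq_bihomogeneous[OF opF_bihomogeneous, of f m n]
    a_sq_bihomogeneous[OF opE_bihomogeneous, of f m n]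
    y_sq_bihomogeneous[OF a_sq_bihomogeneous[OF opS_bihomogeneous], of f m n]
  by (intro bihomogeneous_closed) (simp_all add: add.commute)

lemma lift_vars_lt_d: "f \<in> vars_lt_d \<Longrightarrow> lift m n f \<in> vars_lt_d"
  unfolding lift_def raise_comb_def
  by (intro vars_lt_d_closed y_dot_a_vars_lt_d y_sq_vars_lt_d a_sq_vars_lt_d opE_vars_lt_d
      opF_vars_lt_d opS_vars_lt_d)

lemma lift_harmonic:
  assumes f: "f \<in> bihomogeneous m n" "f \<in> harmonic"
  shows "lift m n f \<in> harmonic"
proof -
  have "opBox d eta (lift m n f) = 0"
    using f opBox_y_sq_bihomogeneous[OF opF_bihomogeneous[OF f(1)]]
      opBox_y_sq_bihomogeneous[OF a_sq_bihomogeneous[OF opS_bihomogeneous[OF f(1)]]]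
    by (simp add: harmonic_def lift_def raise_comb_def opBox_y_dot_a opBox_a_sq opBox_opE opBox_opF
        opBox_opS algebra_simps)
  moreover have "opT d eta (lift m n f) = 0"
    using f opT_a_sq_bihomogeneous[OF opE_bihomogeneous[OF f(1)]]
      opT_a_sq_bihomogeneous[OF opS_bihomogeneous[OF f(1)]]
    by (simp add: harmonic_def lift_def raise_comb_def opT_y_dot_a opT_y_sq opT_opE opT_opF opT_opS
        algebra_simps)
  ultimately show ?thesis
    by (simp add: harmonic_def)
qed

lemma opS_lift:
  assumes "f \<in> bihomogeneous m n" "f \<in> harmonic"
  shows "opS d eta (lift m n f) = psi (harm_const m) (harm_const n) 0 f"
proof -
  have "of_int m + of_int n + real d = (harm_const m + harm_const n) / 2 + 2"
    by (simp add: harm_const_def field_simps)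
  with assms show ?thesis
    by (simp add: lift_def psi_def opS_raise_comb algebra_simps)
qed

lemma opS_psi:
  assumes "f \<in> bihomogeneous (m - int k) (n - int k)" "f \<in> harmonic"
  shows "opS d eta (psi (harm_const m) (harm_const n) k f) =
    psi (harm_const m) (harm_const n) (Suc k) (opS d eta f)"
proof -
  define a b j where "a = harm_const m" and "b = harm_const n" and "j = real k"
  have deg: "of_int (m - int k) + of_int (n - int k) - 2 + real d = (a + b) / 2 - 2 * j"
    by (simp add: a_def b_def j_def harm_const_def)
  have "(j + 1) * (a * b * ((a + b) / 2 - j + 2) - (a + b) * j) - 2 * (2 * (j + 1) * (b - j))
      - 2 * (2 * (j + 1) * (a - j)) + ((a + b) / 2 - 2 * j) * (a * b + 4 * (j + 1))
      = (j + 1 + 1) * (a * b * ((a + b) / 2 - (j + 1) + 2) - (a + b) * (j + 1))"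
    by (simp add: field_simps)
  moreover have "2 * (j + 1) * (b - j) - 2 * (2 * (j + 1) - b) = 2 * (j + 1 + 1) * (b - (j + 1))"
    by (simp add: algebra_simps)
  moreover have "2 * (j + 1) * (a - j) - 2 * (2 * (j + 1) - a) = 2 * (j + 1 + 1) * (a - (j + 1))"
    by (simp add: algebra_simps)
  moreover have "a * b + 4 * (j + 1) + 4 * 1 = a * b + 4 * (j + 1 + 1)"
    by simp
  moreover have "2 * (j + 1) - b + 2 * 1 = 2 * (j + 1 + 1) - b" and "2 * (j + 1) - a + 2 * 1 = 2 * (j + 1 + 1) - a"
    by simp_all
  moreover have "real (Suc k) = j + 1"
    by (simp add: j_def)
  ultimately show ?thesis
    unfolding a_def[symmetric] b_def[symmetric] psi_def opS_psi_comb[OF assms] deg j_def[symmetric]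
    by (simp only:)
qed

section \<open>Injectivity of psi\<close>

lemma opE_opF_bihomogeneous:
  "p \<in> bihomogeneous m n \<Longrightarrow> opE (opF p) = opF (opE p) + (of_int m - of_int n) *\<^sub>R p"
  by (simp add: opE_opF euler_y_bihomogeneous euler_a_bihomogeneous algebra_simps)

definition ef_root :: "int \<Rightarrow> int \<Rightarrow> nat \<Rightarrow> real" where
  "ef_root m n t = (real t + 1) * (of_int m - of_int n + real t)"

fun ef_product :: "int \<Rightarrow> int \<Rightarrow> nat \<Rightarrow> cpoly \<Rightarrow> cpoly" where
  "ef_product m n 0 p = p"
| "ef_product m n (Suc k) p = opE (opF (ef_product m n k p)) - ef_root m n k *\<^sub>R ef_product m n k p"

lemma opE_opF_bihomogeneous_closed: "p \<in> bihomogeneous m n \<Longrightarrow> opE (opF p) \<in> bihomogeneous m n"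
  using opE_bihomogeneous[OF opF_bihomogeneous, of p m n] by simp

lemma ef_product_bihomogeneous: "p \<in> bihomogeneous m n \<Longrightarrow> ef_product m' n' k p \<in> bihomogeneous m n"
  by (induction k) (auto intro!: subspace_diff[OF subspace_bihomogeneous]
      subspace_scale[OF subspace_bihomogeneous] opE_opF_bihomogeneous_closed)

lemma ef_product_shift:
  assumes p: "p \<in> bihomogeneous m (n + 1)"
  shows "ef_product m (n + 1) (Suc k) p = opF (ef_product (m + 1) n k (opE p))"
proof (induction k)
  case 0
  show ?case
    using opE_opF_bihomogeneous[OF p] by (simp add: ef_root_def)
next
  case (Suc k)
  define q where "q = ef_product (m + 1) n k (opE p)"
  have "q \<in> bihomogeneous (m + 1) n"
    unfolding q_def using opE_bihomogeneous[OF p] by (intro ef_product_bihomogeneous) simp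
  then have "opF q \<in> bihomogeneous m (n + 1)"
    using opF_bihomogeneous by fastforce
  then have EF: "opE (opF (opF q)) = opF (opE (opF q)) + (of_int m - of_int (n + 1)) *\<^sub>R opF q"
    by (rule opE_opF_bihomogeneous)
  have root: "ef_root m (n + 1) (Suc k) = ef_root (m + 1) n k + (of_int m - of_int (n + 1))"
    by (simp add: ef_root_def algebra_simps)
  have "ef_product m (n + 1) (Suc (Suc k)) p = opE (opF (opF q)) - ef_root m (n + 1) (Suc k) *\<^sub>R opF q"
    by (simp only: ef_product.simps(2)[of m "n + 1" "Suc k"] Suc.IH q_def)
  also have "\<dots> = opF (opE (opF q) - ef_root (m + 1) n k *\<^sub>R q)"
    unfolding EF root by (simp add: scaleR_add_left)
  also have "\<dots> = opF (ef_product (m + 1) n (Suc k) (opE p))"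
    by (simp only: ef_product.simps(2)[of "m + 1" n k] q_def)
  finally show ?case .
qed

lemma ef_product_vanishes: "p \<in> bihomogeneous m (int n) \<Longrightarrow> ef_product m (int n) (Suc n) p = 0"
proof (induction n arbitrary: m p)
  case 0
  then have "opE p = 0"
    using bihomogeneous_negative_eq_0[OF opE_bihomogeneous] by fastforce
  then show ?case
    using opE_opF_bihomogeneous[OF "0.prems"] by (simp add: ef_root_def)
next
  case (Suc n)
  then have p: "p \<in> bihomogeneous m (int n + 1)"
    by (simp add: add.commute)
  then have "opE p \<in> bihomogeneous (m + 1) (int n)"
    using opE_bihomogeneous by fastforce
  then have "opF (ef_product (m + 1) (int n) (Suc n) (opE p)) = 0"
    by (simp only: Suc.IH linear_0[OF linear_opF])
  then show ?case
    using ef_product_shift[OF p, of "Suc n"] by (simp add: add.commute)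
qed

lemma ef_product_eigen:
  assumes "opE (opF f) = c *\<^sub>R f"
  shows "ef_product m n k f = (\<Prod>t<k. c - ef_root m n t) *\<^sub>R f"
proof (induction k)
  case (Suc k)
  define P where "P = (\<Prod>t<k. c - ef_root m n t)"
  have "ef_product m n (Suc k) f = P *\<^sub>R opE (opF f) - ef_root m n k *\<^sub>R P *\<^sub>R f"
    by (simp only: ef_product.simps Suc P_def linear_simps[OF linear_opE] linear_simps[OF linear_opF])
  also have "\<dots> = (P * (c - ef_root m n k)) *\<^sub>R f"
    using assms by (simp add: scaleR_diff_left right_diff_distrib)
  finally show ?case
    by (simp only: P_def prod.lessThan_Suc)
qed simp

lemma opE_opF_eigenvalue:
  assumes "p \<in> bihomogeneous m (int n)" "opE (opF p) = c *\<^sub>R p" "p \<noteq> 0"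
  shows "\<exists>t\<le>n. c = ef_root m (int n) t"
proof -
  have "(\<Prod>t<Suc n. c - ef_root m (int n) t) *\<^sub>R p = 0"
    using ef_product_vanishes[OF assms(1)] ef_product_eigen[OF assms(2)] by simp
  with assms(3) show ?thesis
    by (auto simp: less_Suc_eq_le intro: less_imp_le)
qed

text \<open>The eigenvalue of \<open>psi a b k\<close> on an \<open>f\<close> of bidegree \<open>(m, n)\<close> with \<open>opS d eta f = 0\<close>
  and \<open>opE (opF f) = ef_root m n t *\<^sub>R f\<close>.\<close>

definition psi_eigenvalue :: "real \<Rightarrow> real \<Rightarrow> nat \<Rightarrow> int \<Rightarrow> int \<Rightarrow> nat \<Rightarrow> real" where
  "psi_eigenvalue a b k m n t =
     (real k + 1) * (a * b * ((a + b) / 2 - real k + 2) - (a + b) * real k)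
     + 2 * (real k + 1) * (a - real k) * (of_int m - of_int n)
     - 2 * (real k + 1) * (a + b - 2 * real k) * ef_root m n t"

lemma psi_eigenvalue_pos:
  assumes "3 \<le> d" "t \<le> Q"
  shows "0 < psi_eigenvalue (harm_const (int (P + k))) (harm_const (int (Q + k))) k (int P) (int Q) t"
proof -
  define j x where "j = real k" and "x = real k + real d - 3"
  define al be w where "al = 2 * real P + 1 + x" and "be = 2 * real Q + 1 + x"
    and "w = real P + real Q + 3 + x"
  have nonneg: "0 \<le> j" "0 \<le> x" "j \<le> x" "2 \<le> w" "1 \<le> al" "1 \<le> be"
    using assms by (simp_all add: j_def x_def al_def be_def w_def)
  have "psi_eigenvalue (harm_const (int (P + k))) (harm_const (int (Q + k))) k (int P) (int Q) t
      = (j + 1) * (al * be * (x + 1) + j * ((al + be) * (w - 1) + j * (w - 2))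
          + (1 + x) * (al * (real P + 1) + be * (real Q + 1))
          + 2 * (al + be) * (real Q - real t) * (real P + real t + 1))"
    by (simp add: psi_eigenvalue_def ef_root_def harm_const_def j_def x_def al_def be_def w_def
        field_simps)
  \<comment> \<open>every summand is nonnegative since \<open>d \<ge> 3\<close> gives \<open>x \<ge> 0\<close>, and \<open>al * be * (x + 1) > 0\<close>\<close>
  also have "0 < \<dots>"
  proof -
    have "0 < al * be * (x + 1)"
      using nonneg by simp
    moreover have "0 \<le> j * ((al + be) * (w - 1) + j * (w - 2))"
      using nonneg by simp
    moreover have "0 \<le> (1 + x) * (al * (real P + 1) + be * (real Q + 1))"
      using nonneg by simp
    moreover have "0 \<le> 2 * (al + be) * (real Q - real t) * (real P + real t + 1)"
      using nonneg assms(2) by simp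
    ultimately show ?thesis
      using nonneg by (intro mult_pos_pos) linarith+
  qed
  finally show ?thesis .
qed

lemma psi_kernel_eq_0:
  assumes d: "3 \<le> d" and f: "f \<in> bihomogeneous (int P) (int Q)" "opS d eta f = 0"
    and psi: "psi (harm_const (int (P + k))) (harm_const (int (Q + k))) k f = 0"
  shows "f = 0"
proof (rule ccontr)
  assume "f \<noteq> 0"
  define a b where "a = harm_const (int (P + k))" and "b = harm_const (int (Q + k))"
  define A B2 B where "A = (real k + 1) * (a * b * ((a + b) / 2 - real k + 2) - (a + b) * real k)"
    and "B2 = 2 * (real k + 1) * (a - real k)" and "B = 2 * (real k + 1) * (a + b - 2 * real k)"
  have "B > 0"
    using d by (simp add: B_def a_def b_def harm_const_def)
  have FE: "opF (opE f) = opE (opF f) - (real P - real Q) *\<^sub>R f"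
    using opE_opF_bihomogeneous[OF f(1)] by simp
  have "0 = psi a b k f"
    using psi by (simp add: a_def b_def)
  also have "\<dots> = (A + B2 * (real P - real Q)) *\<^sub>R f - B *\<^sub>R opE (opF f)"
    using f by (simp add: psi_def psi_comb_def FE A_def B2_def B_def algebra_simps)
  finally have "B *\<^sub>R opE (opF f) = (A + B2 * (real P - real Q)) *\<^sub>R f"
    by simp
  then have "opE (opF f) = ((A + B2 * (real P - real Q)) / B) *\<^sub>R f"
    using \<open>B > 0\<close> by (simp add: eq_vector_fraction_iff)
  then obtain t where "t \<le> Q" and t: "(A + B2 * (real P - real Q)) / B = ef_root (int P) (int Q) t"
    using opE_opF_eigenvalue[of f "int P" Q] f(1) \<open>f \<noteq> 0\<close> by auto
  then have "psi_eigenvalue a b k (int P) (int Q) t = 0"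
    using \<open>B > 0\<close> by (simp add: psi_eigenvalue_def A_def B2_def B_def field_simps)
  with psi_eigenvalue_pos[OF d \<open>t \<le> Q\<close>, of P k] show False
    by (simp add: a_def b_def)
qed

text \<open>Induction on the degree in \<open>a\<close>: since \<open>opS\<close> intertwines \<open>psi\<close> at steps \<open>k\<close> and
  \<open>k + 1\<close>, the induction hypothesis gives \<open>opS d eta f = 0\<close>, and then \<open>psi_kernel_eq_0\<close> applies.\<close>

lemma psi_injective:
  assumes d: "3 \<le> d"
  shows "f \<in> bihomogeneous (int P) (int Q) \<Longrightarrow> f \<in> harmonic \<Longrightarrow>
    psi (harm_const (int (P + k))) (harm_const (int (Q + k))) k f = 0 \<Longrightarrow> f = 0"
proof (induction Q arbitrary: P k f)
  case 0
  then have "opS d eta f = 0"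
    using bihomogeneous_negative_eq_0[OF opS_bihomogeneous] by fastforce
  then show ?case
    using psi_kernel_eq_0[OF d "0.prems"(1)] "0.prems"(3) by blast
next
  case (Suc Q)
  have "opS d eta f = 0"
  proof (cases P)
    case 0
    then show ?thesis
      using bihomogeneous_negative_eq_0[OF opS_bihomogeneous[OF Suc.prems(1)]] by simp
  next
    case (Suc P')
    have deg: "int (P + k) - int k = int P" "int (Suc Q + k) - int k = int (Suc Q)"
      by simp_all
    have "psi (harm_const (int (P + k))) (harm_const (int (Suc Q + k))) (Suc k) (opS d eta f)
        = opS d eta (psi (harm_const (int (P + k))) (harm_const (int (Suc Q + k))) k f)"
      using opS_psi[of f "int (P + k)" k "int (Suc Q + k)", unfolded deg] Suc.prems(1,2) by simp
    also have "\<dots> = 0"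
      by (simp only: Suc.prems(3) linear_0[OF linear_opS])
    finally have "psi (harm_const (int (P' + Suc k))) (harm_const (int (Q + Suc k))) (Suc k)
        (opS d eta f) = 0"
      using \<open>P = Suc P'\<close> by simp
    moreover have "opS d eta f \<in> bihomogeneous (int P') (int Q)"
      using opS_bihomogeneous[OF Suc.prems(1)] \<open>P = Suc P'\<close> by simp
    moreover have "opS d eta f \<in> harmonic"
      using Suc.prems(2) by (rule opS_harmonic)
    ultimately show ?thesis
      using Suc.IH by blast
  qed
  then show ?case
    using psi_kernel_eq_0[OF d Suc.prems(1)] Suc.prems(3) by blast
qed


section \<open>Surjectivity of S\<close>

definition multi_indices :: "nat \<Rightarrow> (nat \<Rightarrow> nat) set" where
  "multi_indices K = {al. \<forall>i. (i \<in> {..<d} \<longrightarrow> al i \<in> {..K}) \<and> (i \<notin> {..<d} \<longrightarrow> al i = 0)}"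

definition coeff_support :: "cpoly \<Rightarrow> ((nat \<Rightarrow> nat) \<times> (nat \<Rightarrow> nat)) set" where
  "coeff_support p = {(al, be). p al be \<noteq> 0}"

lemma finite_multi_indices: "finite (multi_indices K)"
  unfolding multi_indices_def by (rule finite_set_of_finite_funs) auto

lemma le_deg: "i < d \<Longrightarrow> al i \<le> deg al"
  unfolding deg_def by (rule member_le_sum) auto

lemma coeff_support_subset_multi_indices:
  assumes "p \<in> vars_lt_d" and "\<And>al be. p al be \<noteq> 0 \<Longrightarrow> deg al \<le> K \<and> deg be \<le> K"
  shows "coeff_support p \<subseteq> multi_indices K \<times> multi_indices K"
proof
  fix z
  assume "z \<in> coeff_support p"
  then obtain al be where z: "z = (al, be)" and "p al be \<noteq> 0"
    by (auto simp: coeff_support_def)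
  with assms have "\<forall>i\<ge>d. al i = 0 \<and> be i = 0" "deg al \<le> K" "deg be \<le> K"
    by (auto dest: vars_lt_dD)
  then show "z \<in> multi_indices K \<times> multi_indices K"
    unfolding z multi_indices_def using le_deg[of _ al] le_deg[of _ be]
    by (auto simp: not_less intro: order_trans)
qed

lemma finite_coeff_support_if_bounded:
  "p \<in> vars_lt_d \<Longrightarrow> (\<And>al be. p al be \<noteq> 0 \<Longrightarrow> deg al \<le> K \<and> deg be \<le> K) \<Longrightarrow> finite (coeff_support p)"
  using coeff_support_subset_multi_indices finite_multi_indices by (meson finite_SigmaI finite_subset)

lemma finite_coeff_support_bounded_deg:
  assumes "finite (coeff_support p)"
  obtains K where "\<And>al be. p al be \<noteq> 0 \<Longrightarrow> deg al \<le> K \<and> deg be \<le> K"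
proof
  fix al be
  assume "p al be \<noteq> 0"
  then have "(al, be) \<in> coeff_support p"
    by (simp add: coeff_support_def)
  then show "deg al \<le> Max ((\<lambda>(al, be). max (deg al) (deg be)) ` coeff_support p)
      \<and> deg be \<le> Max ((\<lambda>(al, be). max (deg al) (deg be)) ` coeff_support p)"
    using assms by (auto intro!: Max_ge[THEN le_trans[rotated]])
qed

definition monomial :: "(nat \<Rightarrow> nat) \<Rightarrow> (nat \<Rightarrow> nat) \<Rightarrow> cpoly" where
  "monomial al be = (\<lambda>x y. if x = al \<and> y = be then 1 else 0)"

lemma bihomogeneous_in_span_monomials:
  assumes "p \<in> bihomogeneous (int m) (int n)" "p \<in> vars_lt_d"
  shows "p \<in> span ((\<lambda>(al, be). monomial al be) ` (multi_indices (max m n) \<times> multi_indices (max m n)))"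
    (is "_ \<in> span (?mono ` ?I)")
proof -
  have "coeff_support p \<subseteq> ?I"
    using assms by (intro coeff_support_subset_multi_indices) (auto dest: bihomogeneousD)
  then have "p = (\<Sum>z\<in>?I. p (fst z) (snd z) *\<^sub>R ?mono z)"
  proof (intro ext)
    fix al be
    assume sub: "coeff_support p \<subseteq> ?I"
    have "(\<Sum>z\<in>?I. p (fst z) (snd z) *\<^sub>R ?mono z) al be = (\<Sum>z\<in>?I. if z = (al, be) then p al be else 0)"
      by (auto simp: sum_fun_apply monomial_def intro!: sum.cong)
    also have "\<dots> = p al be"
      using sub finite_multi_indices by (auto simp: coeff_support_def)
    finally show "p al be = (\<Sum>z\<in>?I. p (fst z) (snd z) *\<^sub>R ?mono z) al be"
      by simp
  qed
  also have "\<dots> \<in> span (?mono ` ?I)"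
    by (intro span_sum span_scale span_base imageI)
  finally show ?thesis .
qed

definition harm_space :: "nat \<Rightarrow> nat \<Rightarrow> cpoly set" where
  "harm_space m n = harmonic \<inter> bihomogeneous (int m) (int n) \<inter> vars_lt_d"

lemma subspace_harmonic: "subspace harmonic"
  unfolding subspace_def harmonic_def by simp

lemma subspace_harm_space: "subspace (harm_space m n)"
  unfolding harm_space_def
  by (intro subspace_inter subspace_harmonic subspace_bihomogeneous subspace_vars_lt_d)

lemma lift_harm_space: "f \<in> harm_space m n \<Longrightarrow> lift (int m) (int n) f \<in> harm_space (Suc m) (Suc n)"
  unfolding harm_space_def
  using lift_bihomogeneous[of f "int m" "int n"] lift_harmonic lift_vars_lt_d by (auto simp: add.commute)

lemma opS_harm_space: "f \<in> harm_space (Suc m) (Suc n) \<Longrightarrow> opS d eta f \<in> harm_space m n"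
  unfolding harm_space_def
  using opS_bihomogeneous[of f "int (Suc m)" "int (Suc n)"] opS_harmonic opS_vars_lt_d by auto

lemma harm_space_opS_image:
  assumes "3 \<le> d" "f \<in> harm_space m n"
  obtains h where "h \<in> harm_space (Suc m) (Suc n)" "opS d eta h = f"
proof -
  let ?L = "\<lambda>f. opS d eta (lift (int m) (int n) f)"
  have "linear ?L"
    unfolding lift_def by (rule linear_comp[OF linear_opS linear_raise_comb])
  moreover have "?L ` harm_space m n \<subseteq> harm_space m n"
    using lift_harm_space opS_harm_space by blast
  moreover have "inj_on ?L (harm_space m n)"
  proof (subst linear_inj_on_iff_eq_0[OF \<open>linear ?L\<close> subspace_harm_space], intro ballI impI)
    fix f
    assume "f \<in> harm_space m n" "?L f = 0"
    then show "f = 0"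
      using psi_injective[OF assms(1), of f m n 0] opS_lift[of f "int m" "int n"]
      by (simp add: harm_space_def)
  qed
  moreover have "harm_space m n \<subseteq>
      span ((\<lambda>(al, be). monomial al be) ` (multi_indices (max m n) \<times> multi_indices (max m n)))"
    using bihomogeneous_in_span_monomials by (auto simp: harm_space_def)
  ultimately have "?L ` harm_space m n = harm_space m n"
    using subspace_harm_space finite_multi_indices by (intro linear_inj_on_imp_surj_on) auto
  with assms(2) obtain h where "h \<in> harm_space m n" "f = ?L h"
    by blast
  then show ?thesis
    using that lift_harm_space by blast
qed

definition deg_restrict :: "(nat \<Rightarrow> nat \<Rightarrow> bool) \<Rightarrow> cpoly \<Rightarrow> cpoly" where
  "deg_restrict P p = (\<lambda>al be. if P (deg al) (deg be) then p al be else 0)"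

lemma linear_deg_restrict: "linear (deg_restrict P)"
  by (rule linearI) (simp_all add: deg_restrict_def fun_eq_iff)

lemma deg_upd_Suc: "mu < d \<Longrightarrow> deg (al(mu := Suc (al mu))) = Suc (deg al)"
  using deg_upd[of mu al "Suc (al mu)"] by simp

lemma dy_deg_restrict: "mu < d \<Longrightarrow> dy mu (deg_restrict P p) = deg_restrict (\<lambda>x y. P (Suc x) y) (dy mu p)"
  by (simp add: deg_restrict_def dy_def fun_eq_iff deg_upd_Suc)

lemma da_deg_restrict: "mu < d \<Longrightarrow> da mu (deg_restrict P p) = deg_restrict (\<lambda>x y. P x (Suc y)) (da mu p)"
  by (simp add: deg_restrict_def da_def fun_eq_iff deg_upd_Suc)

lemma raise_dy_deg_restrict:
  "raise_dy mu (deg_restrict P p) = deg_restrict (\<lambda>x y. P (Suc x) y) (raise_dy mu p)"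
  by (simp add: raise_dy_def dy_deg_restrict linear_sum[OF linear_deg_restrict] linear_scale[OF linear_deg_restrict])

lemma raise_da_deg_restrict:
  "raise_da mu (deg_restrict P p) = deg_restrict (\<lambda>x y. P x (Suc y)) (raise_da mu p)"
  by (simp add: raise_da_def da_deg_restrict linear_sum[OF linear_deg_restrict] linear_scale[OF linear_deg_restrict])

lemma opBox_deg_restrict:
  "opBox d eta (deg_restrict P p) = deg_restrict (\<lambda>x y. P (Suc (Suc x)) y) (opBox d eta p)"
  by (simp add: opBox_eq raise_dy_deg_restrict dy_deg_restrict linear_sum[OF linear_deg_restrict])

lemma opT_deg_restrict:
  "opT d eta (deg_restrict P p) = deg_restrict (\<lambda>x y. P x (Suc (Suc y))) (opT d eta p)"
  by (simp add: opT_eq raise_da_deg_restrict da_deg_restrict linear_sum[OF linear_deg_restrict])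

lemma opS_deg_restrict:
  "opS d eta (deg_restrict P p) = deg_restrict (\<lambda>x y. P (Suc x) (Suc y)) (opS d eta p)"
  by (simp add: opS_eq raise_dy_deg_restrict da_deg_restrict linear_sum[OF linear_deg_restrict])

lemma deg_restrict_harm_space:
  assumes "p \<in> harmonic" "p \<in> vars_lt_d"
  shows "deg_restrict (\<lambda>x y. x = m \<and> y = n) p \<in> harm_space m n"
proof -
  have "deg_restrict (\<lambda>x y. x = m \<and> y = n) p \<in> harmonic"
    using assms(1) by (simp add: harmonic_def opBox_deg_restrict opT_deg_restrict linear_0[OF linear_deg_restrict])
  moreover have "deg_restrict (\<lambda>x y. x = m \<and> y = n) p \<in> bihomogeneous (int m) (int n)"
    by (rule bihomogeneousI) (simp add: deg_restrict_def split: if_splits)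
  moreover have "deg_restrict (\<lambda>x y. x = m \<and> y = n) p \<in> vars_lt_d"
    using assms(2) by (intro vars_lt_dI) (auto simp: deg_restrict_def dest: vars_lt_dD split: if_splits)
  ultimately show ?thesis
    by (simp add: harm_space_def)
qed

lemma sum_deg_restrict:
  assumes "\<And>al be. p al be \<noteq> 0 \<Longrightarrow> deg al \<le> K \<and> deg be \<le> K"
  shows "(\<Sum>m\<le>K. \<Sum>n\<le>K. deg_restrict (\<lambda>x y. x = m \<and> y = n) p) = p"
proof (intro ext)
  fix al be
  have "(\<Sum>m\<le>K. \<Sum>n\<le>K. deg_restrict (\<lambda>x y. x = m \<and> y = n) p) al be
      = (\<Sum>m\<le>K. \<Sum>n\<le>K. if deg al = m \<and> deg be = n then p al be else 0)"
    by (simp add: sum_fun_apply deg_restrict_def)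
  also have "\<dots> = (\<Sum>m\<le>K. if deg al = m \<and> deg be \<le> K then p al be else 0)"
    by (intro sum.cong refl) (cases "deg be \<le> K"; auto)
  also have "\<dots> = (\<Sum>m\<le>K. if deg al = m then (if deg be \<le> K then p al be else 0) else 0)"
    by (intro sum.cong) auto
  also have "\<dots> = p al be"
    using assms[of al be] by (auto simp: sum.delta)
  finally show "(\<Sum>m\<le>K. \<Sum>n\<le>K. deg_restrict (\<lambda>x y. x = m \<and> y = n) p) al be = p al be" .
qed

lemma vars_lt_d_iff: "p \<in> vars_lt_d \<longleftrightarrow> (\<forall>al be. p al be \<noteq> 0 \<longrightarrow> (\<forall>i\<ge>d. al i = 0 \<and> be i = 0))"
  using vars_lt_dI vars_lt_dD by blast

lemma harmN_eq: "harmN d eta = {p. p \<in> harmonic \<and> p \<in> vars_lt_d \<and> finite (coeff_support p)}"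
proof -
  have "(\<lambda>_ _. 0 :: real) = (0 :: cpoly)"
    by (simp add: fun_eq_iff)
  then show ?thesis
    by (auto simp: harmN_def is_poly_def harmonic_def vars_lt_d_iff coeff_support_def)
qed

lemma harm_space_subset_harmN: "harm_space m n \<subseteq> harmN d eta"
  unfolding harmN_eq harm_space_def
  by (auto intro!: finite_coeff_support_if_bounded[of _ "max m n"] dest: bihomogeneousD)

lemma subspace_finite_coeff_support: "subspace {p. finite (coeff_support p)}"
proof -
  have "coeff_support (p + q) \<subseteq> coeff_support p \<union> coeff_support q"
    and "coeff_support (c *\<^sub>R p) \<subseteq> coeff_support p" for p q :: cpoly and c
    by (auto simp: coeff_support_def)
  then have "finite (coeff_support p) \<Longrightarrow> finite (coeff_support q) \<Longrightarrow> finite (coeff_support (p + q))"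
    and "finite (coeff_support p) \<Longrightarrow> finite (coeff_support (c *\<^sub>R p))" for p q :: cpoly and c
    by (meson finite_UnI finite_subset)+
  then show ?thesis
    unfolding subspace_def by (simp add: coeff_support_def)
qed

lemma subspace_harmN: "subspace (harmN d eta)"
  unfolding harmN_eq Collect_conj_eq Collect_mem_eq
  by (intro subspace_inter subspace_harmonic subspace_vars_lt_d subspace_finite_coeff_support)

lemma opS_image_harmN_subset: "opS d eta ` harmN d eta \<subseteq> harmN d eta"
proof clarify
  fix p
  assume p: "p \<in> harmN d eta"
  then have "finite (coeff_support p)"
    by (simp add: harmN_eq)
  then obtain K where K: "\<And>al be. p al be \<noteq> 0 \<Longrightarrow> deg al \<le> K \<and> deg be \<le> K"
    using finite_coeff_support_bounded_deg by metis
  then have "p = deg_restrict (\<lambda>x y. x \<le> K \<and> y \<le> K) p"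
    by (auto simp: deg_restrict_def fun_eq_iff)
  then have "opS d eta p = opS d eta (deg_restrict (\<lambda>x y. x \<le> K \<and> y \<le> K) p)"
    by (rule arg_cong)
  also have "\<dots> = deg_restrict (\<lambda>x y. Suc x \<le> K \<and> Suc y \<le> K) (opS d eta p)"
    by (rule opS_deg_restrict)
  finally have S: "opS d eta p = deg_restrict (\<lambda>x y. Suc x \<le> K \<and> Suc y \<le> K) (opS d eta p)" .
  have "deg al \<le> K \<and> deg be \<le> K" if "opS d eta p al be \<noteq> 0" for al be
  proof -
    have "deg_restrict (\<lambda>x y. Suc x \<le> K \<and> Suc y \<le> K) (opS d eta p) al be \<noteq> 0"
      using that S by metis
    then show ?thesis
      by (simp add: deg_restrict_def split: if_splits)
  qed
  then have "finite (coeff_support (opS d eta p))"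
    using p by (intro finite_coeff_support_if_bounded[of _ K] opS_vars_lt_d) (auto simp: harmN_eq)
  with p show "opS d eta p \<in> harmN d eta"
    by (simp add: harmN_eq opS_harmonic opS_vars_lt_d)
qed

lemma harmN_subset_opS_image:
  assumes "3 \<le> d"
  shows "harmN d eta \<subseteq> opS d eta ` harmN d eta"
proof
  fix f
  assume f: "f \<in> harmN d eta"
  then have "finite (coeff_support f)"
    by (simp add: harmN_eq)
  then obtain K where K: "\<And>al be. f al be \<noteq> 0 \<Longrightarrow> deg al \<le> K \<and> deg be \<le> K"
    using finite_coeff_support_bounded_deg by metis
  have "\<exists>h. h \<in> harm_space (Suc m) (Suc n) \<and> opS d eta h = deg_restrict (\<lambda>x y. x = m \<and> y = n) f"
    for m n
  proof -
    have "deg_restrict (\<lambda>x y. x = m \<and> y = n) f \<in> harm_space m n"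
      using f by (intro deg_restrict_harm_space) (simp_all add: harmN_eq)
    then show ?thesis
      using harm_space_opS_image[OF assms] by blast
  qed
  then obtain h where h: "\<And>m n. h m n \<in> harm_space (Suc m) (Suc n)"
      "\<And>m n. opS d eta (h m n) = deg_restrict (\<lambda>x y. x = m \<and> y = n) f"
    by metis
  have "(\<Sum>m\<le>K. \<Sum>n\<le>K. h m n) \<in> harmN d eta"
    by (intro subspace_sum[OF subspace_harmN]) (use h(1) harm_space_subset_harmN in blast)
  moreover have "opS d eta (\<Sum>m\<le>K. \<Sum>n\<le>K. h m n) = f"
    using sum_deg_restrict[OF K] by (simp add: h(2))
  ultimately show "f \<in> opS d eta ` harmN d eta"
    by (metis image_eqI)
qed

end

lemma inverse_metric_exists:
  assumes "sym_nondeg d eta"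
  obtains g where "inverse_metric d eta g"
proof -
  have eta_sym: "\<And>mu nu. mu < d \<Longrightarrow> nu < d \<Longrightarrow> eta mu nu = eta nu mu"
    and nondeg: "\<And>v. \<forall>nu<d. (\<Sum>mu<d. eta mu nu * v mu) = 0 \<Longrightarrow> \<forall>mu<d. v mu = 0"
    using assms by (auto simp: sym_nondeg_def)
  define V :: "(nat \<Rightarrow> real) set" where "V = {v. \<forall>i\<ge>d. v i = 0}"
  define unit :: "nat \<Rightarrow> nat \<Rightarrow> real" where "unit r = (\<lambda>i. if i = r then 1 else 0)" for r
  define L :: "(nat \<Rightarrow> real) \<Rightarrow> nat \<Rightarrow> real"
    where "L v = (\<lambda>nu. if nu < d then \<Sum>mu<d. eta mu nu * v mu else 0)" for v
  have "subspace V"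
    by (auto simp: subspace_def V_def)
  have "V \<subseteq> span (unit ` {..<d})"
  proof
    fix v
    assume "v \<in> V"
    have "(\<Sum>r<d. v r *\<^sub>R unit r) i = (\<Sum>r<d. if i = r then v r else 0)" for i
      unfolding sum_fun_apply by (intro sum.cong) (simp_all add: unit_def)
    with \<open>v \<in> V\<close> have "v = (\<Sum>r<d. v r *\<^sub>R unit r)"
      by (auto simp: fun_eq_iff V_def not_less)
    also have "\<dots> \<in> span (unit ` {..<d})"
      by (intro span_sum span_scale span_base) auto
    finally show "v \<in> span (unit ` {..<d})" .
  qed
  have "linear L"
    by (rule linearI) (auto simp: L_def fun_eq_iff sum.distrib sum_distrib_left algebra_simps)
  have "L ` V \<subseteq> V"
    by (auto simp: L_def V_def)
  have "inj_on L V"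
  proof (subst linear_inj_on_iff_eq_0[OF \<open>linear L\<close> \<open>subspace V\<close>], intro ballI impI)
    fix v
    assume "v \<in> V" "L v = 0"
    have "(\<Sum>mu<d. eta mu nu * v mu) = 0" if "nu < d" for nu
      using fun_cong[OF \<open>L v = 0\<close>, of nu] that by (simp add: L_def)
    then have "\<forall>mu<d. v mu = 0"
      using nondeg by blast
    with \<open>v \<in> V\<close> show "v = 0"
      by (simp add: V_def fun_eq_iff) (metis not_le)
  qed
  have "L ` V = V"
    using linear_inj_on_imp_surj_on[OF \<open>linear L\<close> \<open>subspace V\<close> \<open>V \<subseteq> span (unit ` {..<d})\<close> _
        \<open>L ` V \<subseteq> V\<close> \<open>inj_on L V\<close>] by simp
  have "\<exists>v. r < d \<longrightarrow> L v = unit r" for r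
  proof (cases "r < d")
    case True
    then have "unit r \<in> L ` V"
      using \<open>L ` V = V\<close> by (simp add: V_def unit_def)
    then show ?thesis
      by (auto elim!: imageE)
  qed simp
  then obtain w where w: "\<And>r. r < d \<Longrightarrow> L (w r) = unit r"
    by metis
  define g where "g mu r = w r mu" for mu r
  have eta_g: "(\<Sum>nu<d. eta mu nu * g nu r) = (if mu = r then 1 else 0)" if "mu < d" "r < d" for mu r
  proof -
    have "(\<Sum>nu<d. eta mu nu * g nu r) = (\<Sum>nu<d. eta nu mu * w r nu)"
      using that by (intro sum.cong) (simp_all add: g_def eta_sym)
    also have "\<dots> = L (w r) mu"
      using that by (simp add: L_def)
    finally show ?thesis
      using w[OF \<open>r < d\<close>] by (simp add: unit_def)
  qed
  have g_sym: "g s r = g r s" if "s < d" "r < d" for s r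
  proof -
    have "g s r = (\<Sum>nu<d. if nu = s then g nu r else 0)"
      using that by simp
    also have "\<dots> = (\<Sum>nu<d. (\<Sum>mu<d. eta nu mu * g mu s) * g nu r)"
      using that by (intro sum.cong) (simp_all add: eta_g)
    also have "\<dots> = (\<Sum>nu<d. \<Sum>mu<d. g mu s * (eta mu nu * g nu r))"
      by (intro sum.cong) (simp_all add: sum_distrib_left sum_distrib_right eta_sym mult_ac)
    also have "\<dots> = (\<Sum>mu<d. g mu s * (\<Sum>nu<d. eta mu nu * g nu r))"
      by (subst sum.swap) (simp add: sum_distrib_left)
    also have "\<dots> = (\<Sum>mu<d. if mu = r then g mu s else 0)"
      using that by (intro sum.cong) (simp_all add: eta_g)
    also have "\<dots> = g r s"
      using that by simp
    finally show ?thesis .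
  qed
  have "inverse_metric d eta g"
    by unfold_locales (use eta_sym g_sym eta_g in blast)+
  then show ?thesis
    by (rule that)
qed

theorem mainTheorem10:
  fixes d :: nat and eta :: "nat \<Rightarrow> nat \<Rightarrow> real"
  assumes "d \<ge> 3" and "sym_nondeg d eta"
  shows "opS d eta ` harmN d eta = harmN d eta"
proof -
  obtain g where "inverse_metric d eta g"
    using assms(2) by (rule inverse_metric_exists)
  then interpret inverse_metric d eta g .
  show ?thesis
    using opS_image_harmN_subset harmN_subset_opS_image[OF assms(1)] by blast
qed

end
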